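(* Suppose $\mathrm{OPT}_\tau$ crosses a vertical line $\Gamma$ at least twice. Let $p_1,p_2$ be two such crossing points and let $L_1$ be a subpath of $\mathrm{OPT}_\tau$ from $p_1$ to $p_2$ having no other crossings with $\Gamma$. Then $\mathrm{OPT}_\tau$ has no other crossing with $\Gamma$ on the segment $p_1p_2$ of $\Gamma$.
   Context: Instance: vertical line segments in $\mathbb{R}^2$, each of length $1$, with pairwise distinct $x$-coordinates; the minimal bounding box has height $H>3$. A tour is a cyclic sequence of points, each on some segment, with each segment containing one of them; consecutive points are joined by straight legs; cost is total length. $\mathrm{OPT}$ is a fixed oriented minimum-cost tour with no two consecutive points on the same segment and not self-crossing. Cover-lines: horizontal lines $C_1,C_2,\dots$ (top to bottom) spaced $1$ apart, $C_1$ through the bottom tip of the top-most segment; a segment is covered by the top-most cover-line intersecting it. Strip $S_\tau$: closed region between $C_\tau$ and $C_{\tau+1}$; its top segments are those intersecting $C_\tau$ and its bottom segments those covered by $C_{\tau+1}$. $\mathrm{OPT}_\tau$: the restriction of $\mathrm{OPT}$ to $S_\tau$, with points added where legs meet $C_\tau$ or $C_{\tau+1}$. *)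

theory Defs
  imports "HOL-Analysis.Analysis"
begin

type_synonym point = "real \<times> real"

text \<open>A vertical unit segment is represented by its bottom tip b.\<close>
definition vseg :: "point \<Rightarrow> point set" where
  "vseg b = {(fst b, y) | y. snd b \<le> y \<and> y \<le> snd b + 1}"

definition top_y :: "point set \<Rightarrow> real" where
  "top_y P = Max ((\<lambda>b. snd b + 1) ` P)"

definition bot_y :: "point set \<Rightarrow> real" where
  "bot_y P = Min (snd ` P)"

definition seg_instance :: "point set \<Rightarrow> bool" where
  "seg_instance P \<longleftrightarrow> finite P \<and> P \<noteq> {} \<and> inj_on fst P \<and> top_y P - bot_y P > 3"

definition is_tour :: "point set \<Rightarrow> point list \<Rightarrow> bool" where
  "is_tour P ps \<longleftrightarrow> ps \<noteq> [] \<and> (\<forall>p\<in>set ps. \<exists>b\<in>P. p \<in> vseg b)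
     \<and> (\<forall>b\<in>P. \<exists>!i. i < length ps \<and> ps ! i \<in> vseg b)"

definition nxt :: "point list \<Rightarrow> nat \<Rightarrow> point" where
  "nxt ps i = ps ! ((i + 1) mod length ps)"

definition cost :: "point list \<Rightarrow> real" where
  "cost ps = (\<Sum>i<length ps. dist (ps ! i) (nxt ps i))"

definition no_consec_same_seg :: "point set \<Rightarrow> point list \<Rightarrow> bool" where
  "no_consec_same_seg P ps \<longleftrightarrow>
     (\<forall>i<length ps. \<forall>b\<in>P. \<not> (ps ! i \<in> vseg b \<and> nxt ps i \<in> vseg b))"

definition leg :: "point list \<Rightarrow> nat \<Rightarrow> point set" where
  "leg ps i = closed_segment (ps ! i) (nxt ps i)"

definition legs_cross :: "point list \<Rightarrow> nat \<Rightarrow> nat \<Rightarrow> bool" where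
  "legs_cross ps i j \<longleftrightarrow> (\<exists>q. leg ps i \<inter> leg ps j = {q}
      \<and> q \<in> open_segment (ps ! i) (nxt ps i) \<and> q \<in> open_segment (ps ! j) (nxt ps j))"

definition non_self_crossing :: "point list \<Rightarrow> bool" where
  "non_self_crossing ps \<longleftrightarrow>
     (\<forall>i<length ps. \<forall>j<length ps. i \<noteq> j \<longrightarrow> \<not> legs_cross ps i j)"

text \<open>Parametrisation of the closed polygonal tour, period = length ps;
  on [k, k+1] it traverses leg k.\<close>
definition curve :: "point list \<Rightarrow> real \<Rightarrow> point" where
  "curve ps t = (let n = length ps; k = nat (\<lfloor>t\<rfloor> mod int n); u = t - of_int \<lfloor>t\<rfloor>
                 in (1 - u) *\<^sub>R (ps ! k) + u *\<^sub>R (ps ! ((k + 1) mod n)))"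

text \<open>Cover line C_k (k \<ge> 1) is at height top_y P - k; C_1 passes through the
  bottom tip of the top-most segment.\<close>
definition cover_y :: "point set \<Rightarrow> nat \<Rightarrow> real" where
  "cover_y P k = top_y P - real k"

definition strip :: "point set \<Rightarrow> nat \<Rightarrow> point set" where
  "strip P \<tau> = {p. cover_y P (\<tau> + 1) \<le> snd p \<and> snd p \<le> cover_y P \<tau>}"

text \<open>OPT_tau as a point set: the part of the tour lying in the strip.\<close>
definition restr :: "point set \<Rightarrow> point list \<Rightarrow> nat \<Rightarrow> point set" where
  "restr P ps \<tau> = range (curve ps) \<inter> strip P \<tau>"

end

theory Submission
  imports Defs
begin

text \<open>Suppose a point \<open>q\<close> of \<open>OPT\<^sub>\<tau>\<close> lies strictly between \<open>p\<^sub>1\<close> and \<open>p\<^sub>2\<close> on \<open>\<Gamma>\<close>. The subpath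
  \<open>L\<^sub>1\<close> stays on one side of \<open>\<Gamma>\<close>, and the tour passes through \<open>q\<close> into that side; follow the
  ray from \<open>q\<close> along the entering leg up to its first point \<open>z\<close> on \<open>L\<^sub>1\<close>. By Fashoda's
  interlacing theorem \<open>L\<^sub>1\<close> passes above and below every tour vertex on the ray before \<open>z\<close>;
  since \<open>L\<^sub>1\<close> lies in a strip of height one, the unit segment of such a vertex meets a leg, and
  optimality (relocating the vertex onto that leg) forces the vertex to be straight. So the tour
  runs along the ray until it reaches \<open>z\<close>. There it meets \<open>L\<^sub>1\<close> either transversally, which
  contradicts non-self-crossing or, at a vertex, the optimality of a 2-opt move; or along the
  ray, which would put points of \<open>L\<^sub>1\<close> on the ray before \<open>z\<close>.\<close>

section \<open>Tours and their cost\<close>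

lemma mem_vseg_iff: "p \<in> vseg b \<longleftrightarrow> fst p = fst b \<and> snd b \<le> snd p \<and> snd p \<le> snd b + 1"
  by (cases p) (auto simp: vseg_def)

lemma is_tour_distinct:
  assumes "is_tour P ps"
  shows "distinct ps"
proof (rule distinct_conv_nth[THEN iffD2], intro allI impI)
  fix i j assume ij: "i < length ps" "j < length ps" "i \<noteq> j"
  obtain b where b: "b \<in> P" "ps ! i \<in> vseg b"
    using assms ij(1) nth_mem unfolding is_tour_def by blast
  then have "\<exists>!k. k < length ps \<and> ps ! k \<in> vseg b"
    using assms unfolding is_tour_def by blast
  then show "ps ! i \<noteq> ps ! j"
    using b ij by auto
qed

lemma distinct_Ex1_index_iff:
  assumes "distinct xs"
  shows "(\<exists>!i. i < length xs \<and> P (xs ! i)) \<longleftrightarrow> (\<exists>!x. x \<in> set xs \<and> P x)"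
proof
  assume "\<exists>!i. i < length xs \<and> P (xs ! i)"
  then obtain i where i: "i < length xs" "P (xs ! i)"
    and uniq: "\<And>j. j < length xs \<Longrightarrow> P (xs ! j) \<Longrightarrow> j = i"
    by blast
  show "\<exists>!x. x \<in> set xs \<and> P x"
  proof (rule ex1I[of _ "xs ! i"])
    show "\<And>y. y \<in> set xs \<and> P y \<Longrightarrow> y = xs ! i"
      using uniq by (metis in_set_conv_nth)
  qed (use i in simp)
next
  assume "\<exists>!x. x \<in> set xs \<and> P x"
  then obtain x where x: "x \<in> set xs" "P x" and uniq: "\<And>y. y \<in> set xs \<Longrightarrow> P y \<Longrightarrow> y = x"
    by blast
  obtain i where i: "i < length xs" "xs ! i = x" using x(1) by (meson in_set_conv_nth)
  show "\<exists>!i. i < length xs \<and> P (xs ! i)"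
  proof (rule ex1I[of _ i])
    show "\<And>j. j < length xs \<and> P (xs ! j) \<Longrightarrow> j = i"
      using uniq i assms by (metis nth_eq_iff_index_eq nth_mem)
  qed (use i x in simp)
qed

lemma is_tour_iff:
  "is_tour P ps \<longleftrightarrow> ps \<noteq> [] \<and> distinct ps \<and> (\<forall>p\<in>set ps. \<exists>b\<in>P. p \<in> vseg b)
     \<and> (\<forall>b\<in>P. \<exists>!p. p \<in> set ps \<and> p \<in> vseg b)"
proof (cases "distinct ps")
  case True
  have "(\<exists>!i. i < length ps \<and> ps ! i \<in> vseg b) \<longleftrightarrow> (\<exists>!p. p \<in> set ps \<and> p \<in> vseg b)" for b
    using distinct_Ex1_index_iff[OF True] .
  then show ?thesis
    unfolding is_tour_def using True by simp
qed (use is_tour_distinct in blast)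

lemma is_tour_perm:
  assumes "is_tour P ps" "distinct qs" "set qs = set ps"
  shows "is_tour P qs"
  using assms by (auto simp: is_tour_iff)

lemma is_tour_on_vseg: "is_tour P ps \<Longrightarrow> p \<in> set ps \<Longrightarrow> \<exists>b\<in>P. p \<in> vseg b"
  by (simp add: is_tour_def)

lemma is_tour_unique:
  assumes "is_tour P ps" "b \<in> P" "p \<in> set ps" "p' \<in> set ps" "p \<in> vseg b" "p' \<in> vseg b"
  shows "p = p'"
proof -
  have "\<exists>!p. p \<in> set ps \<and> p \<in> vseg b"
    using assms(1,2) unfolding is_tour_iff by blast
  then show ?thesis
    using assms(3-6) by blast
qed

lemma is_tour_fst_eq:
  assumes "inj_on fst P" "is_tour P ps" "p \<in> set ps" "p' \<in> set ps" "fst p = fst p'"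
  shows "p = p'"
proof -
  obtain b b' where b: "b \<in> P" "b' \<in> P" "p \<in> vseg b" "p' \<in> vseg b'"
    using is_tour_on_vseg[OF assms(2)] assms(3,4) by blast
  then have "fst b = fst b'"
    using assms(5) by (simp add: mem_vseg_iff)
  then have "b = b'"
    using inj_onD[OF assms(1)] b(1,2) by blast
  then show ?thesis
    using is_tour_unique[OF assms(2) b(1) assms(3,4)] b by blast
qed

lemma is_tour_replace:
  assumes inj: "inj_on fst P" and tour: "is_tour P ps"
    and b: "b \<in> P" "v \<in> vseg b" "w \<in> vseg b" and v: "v \<in> set ps"
    and qs: "distinct qs" "set qs = insert w (set ps - {v})"
  shows "is_tour P qs"
proof -
  have same_seg: "b' = b" if "b' \<in> P" "p \<in> vseg b'" "p \<in> vseg b" for b' p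
    using inj_onD[OF inj _ that(1) b(1)] that(2,3) by (simp add: mem_vseg_iff)
  note uniq = is_tour_unique[OF tour] and cover = is_tour_on_vseg[OF tour]
  have hit: "\<exists>p\<in>set ps. p \<in> vseg b" if "b \<in> P" for b
    using tour that unfolding is_tour_iff by blast
  show ?thesis
    unfolding is_tour_iff
  proof (intro conjI ballI)
    show "qs \<noteq> []" "distinct qs" using qs by auto
    show "\<exists>b\<in>P. p \<in> vseg b" if "p \<in> set qs" for p
      using that b(1,3) cover unfolding qs(2) by blast
    show "\<exists>!p. p \<in> set qs \<and> p \<in> vseg b'" if b': "b' \<in> P" for b'
    proof (cases "b' = b")
      case True
      show ?thesis
      proof (rule ex1I[of _ w])
        show "p = w" if "p \<in> set qs \<and> p \<in> vseg b'" for p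
          using that True uniq[OF b(1) _ v _ b(2)] unfolding qs(2) by blast
      qed (use True b(3) qs(2) in simp)
    next
      case False
      then have "v \<notin> vseg b'" "w \<notin> vseg b'"
        using same_seg[OF b'] b by blast+
      moreover obtain p where "p \<in> set ps" "p \<in> vseg b'"
        using hit[OF b'] by blast
      ultimately show ?thesis
        using uniq[OF b'] unfolding qs(2) by blast
    qed
  qed
qed

fun polyline_length :: "point list \<Rightarrow> real" where
  "polyline_length (x # y # r) = dist x y + polyline_length (y # r)"
| "polyline_length _ = 0"

lemma polyline_length_Cons:
  "xs \<noteq> [] \<Longrightarrow> polyline_length (x # xs) = dist x (hd xs) + polyline_length xs"
  by (cases xs) auto

lemma polyline_length_append:
  "xs \<noteq> [] \<Longrightarrow> ys \<noteq> [] \<Longrightarrow>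
    polyline_length (xs @ ys) = polyline_length xs + dist (last xs) (hd ys) + polyline_length ys"
  by (induction xs rule: polyline_length.induct) (auto simp: polyline_length_Cons)

lemma polyline_length_rev: "polyline_length (rev xs) = polyline_length xs"
proof (induction xs rule: polyline_length.induct)
  case (1 x y r)
  then show ?case
    using polyline_length_append[of "rev (y # r)" "[x]"] by (simp add: last_rev dist_commute)
qed auto

lemma polyline_length_conv_sum:
  "polyline_length xs = (\<Sum>i<length xs - 1. dist (xs ! i) (xs ! (i + 1)))"
proof (induction xs rule: polyline_length.induct)
  case (1 x y r)
  then show ?case
    by (simp add: sum.lessThan_Suc_shift del: sum.lessThan_Suc)
qed auto

lemma cost_eq_polyline_length:
  assumes "ps \<noteq> []"
  shows "cost ps = polyline_length ps + dist (last ps) (hd ps)"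
proof -
  obtain m where m: "length ps = Suc m" using assms by (cases ps) auto
  have "cost ps = (\<Sum>i<m. dist (ps ! i) (ps ! ((i + 1) mod Suc m))) + dist (ps ! m) (ps ! 0)"
    by (simp add: cost_def nxt_def m)
  also have "(\<Sum>i<m. dist (ps ! i) (ps ! ((i + 1) mod Suc m))) = (\<Sum>i<m. dist (ps ! i) (ps ! (i + 1)))"
    by (intro sum.cong) auto
  finally show ?thesis
    using assms by (simp add: polyline_length_conv_sum last_conv_nth hd_conv_nth m)
qed

lemma cost_Cons:
  "xs \<noteq> [] \<Longrightarrow> cost (v # xs) = dist v (hd xs) + polyline_length xs + dist (last xs) v"
  by (simp add: cost_eq_polyline_length polyline_length_Cons)

lemma cost_rotate1: "cost (rotate1 ps) = cost ps"
proof (cases ps)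
  case (Cons x xs)
  show ?thesis
  proof (cases "xs = []")
    case False
    then have "cost (xs @ [x]) = polyline_length xs + dist (last xs) x + dist x (hd xs)"
      by (simp add: cost_eq_polyline_length polyline_length_append)
    then show ?thesis
      using Cons False by (simp add: cost_Cons)
  qed (use Cons in simp)
qed simp

lemma cost_rotate: "cost (rotate k ps) = cost ps"
  by (induction k) (auto simp: cost_rotate1)

section \<open>The parametrised tour\<close>

definition succ_mod :: "nat \<Rightarrow> nat \<Rightarrow> nat" where
  "succ_mod n k = (k + 1) mod n"

definition pred_mod :: "nat \<Rightarrow> nat \<Rightarrow> nat" where
  "pred_mod n k = (k + n - 1) mod n"

definition prv :: "point list \<Rightarrow> nat \<Rightarrow> point" where
  "prv ps i = ps ! pred_mod (length ps) i"

lemma nxt_conv_succ_mod: "nxt ps i = ps ! succ_mod (length ps) i"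
  by (simp add: nxt_def succ_mod_def)

lemma succ_mod_less: "0 < n \<Longrightarrow> succ_mod n k < n"
  by (simp add: succ_mod_def)

lemma pred_mod_less: "0 < n \<Longrightarrow> pred_mod n k < n"
  by (simp add: pred_mod_def)

lemma succ_pred_mod: "k < n \<Longrightarrow> succ_mod n (pred_mod n k) = k"
  by (cases k) (auto simp: succ_mod_def pred_mod_def mod_Suc_eq)

lemma pred_succ_mod:
  assumes "k < n"
  shows "pred_mod n (succ_mod n k) = k"
proof (cases "k + 1 < n")
  case False
  then have "n = Suc k" using assms by simp
  then show ?thesis by (simp add: succ_mod_def pred_mod_def)
qed (simp add: succ_mod_def pred_mod_def)

lemma prv_succ_mod: "k < length ps \<Longrightarrow> prv ps (succ_mod (length ps) k) = ps ! k"
  by (simp add: prv_def pred_succ_mod)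

lemma nxt_pred_mod: "k < length ps \<Longrightarrow> nxt ps (pred_mod (length ps) k) = ps ! k"
  by (simp add: nxt_conv_succ_mod succ_pred_mod)

lemma succ_mod_neq:
  assumes "2 \<le> n" "k < n"
  shows "succ_mod n k \<noteq> k"
proof (cases "k + 1 < n")
  case False
  then have "n = Suc k" using assms by simp
  then show ?thesis using assms(1) by (simp add: succ_mod_def)
qed (simp add: succ_mod_def)

lemma pred_mod_neq: "2 \<le> n \<Longrightarrow> k < n \<Longrightarrow> pred_mod n k \<noteq> k"
  by (metis less_le_trans pos2 pred_mod_less succ_mod_neq succ_pred_mod)

lemma funpow_succ_mod: "k < n \<Longrightarrow> (succ_mod n ^^ n) k = k"
proof -
  have "k < n \<Longrightarrow> (succ_mod n ^^ r) k = (k + r) mod n" for r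
    by (induction r) (auto simp: succ_mod_def mod_Suc_eq)
  then show "k < n \<Longrightarrow> (succ_mod n ^^ n) k = k" by simp
qed

lemma funpow_pred_mod: "k < n \<Longrightarrow> (pred_mod n ^^ n) k = k"
proof -
  assume k: "k < n"
  have "(pred_mod n ^^ r) k = (k + r * (n - 1)) mod n" for r
  proof (induction r)
    case (Suc r)
    have "(pred_mod n ^^ Suc r) k = pred_mod n ((k + r * (n - 1)) mod n)"
      using Suc by simp
    also have "\<dots> = ((k + r * (n - 1)) mod n + (n - 1)) mod n"
      using k by (simp add: pred_mod_def)
    also have "\<dots> = (k + r * (n - 1) + (n - 1)) mod n"
      by (simp add: mod_add_left_eq)
    finally show ?case
      by (simp only: mult_Suc ac_simps)
  qed (use k in simp)
  from this[of n] show ?thesis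
    using k by simp
qed

lemma nat_mod_succ:
  assumes "0 < n"
  shows "nat ((m + 1) mod int n) = succ_mod n (nat (m mod int n))"
proof -
  have "int (succ_mod n (nat (m mod int n))) = (m + 1) mod int n"
    using assms by (simp add: succ_mod_def zmod_int of_nat_add) (metis add.commute mod_add_left_eq)
  then show ?thesis by linarith
qed

lemma nat_mod_pred:
  assumes "0 < n"
  shows "nat ((m - 1) mod int n) = pred_mod n (nat (m mod int n))"
proof -
  have "int (pred_mod n (nat (m mod int n))) = (m mod int n + int n - 1) mod int n"
    using assms by (simp add: pred_mod_def zmod_int of_nat_diff)
  also have "\<dots> = (m + int n - 1) mod int n"
    by (metis mod_add_left_eq mod_diff_left_eq add_diff_eq)
  also have "\<dots> = (m - 1) mod int n"
    by (metis add.commute add_diff_eq diff_add_eq mod_add_self1)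
  finally show ?thesis by linarith
qed

lemma curve_of_int: "curve ps (of_int m) = ps ! nat (m mod int (length ps))"
  by (simp add: curve_def Let_def)

lemma curve_in_leg:
  "curve ps t \<in> closed_segment (ps ! nat (\<lfloor>t\<rfloor> mod int (length ps))) (nxt ps (nat (\<lfloor>t\<rfloor> mod int (length ps))))"
proof -
  have "0 \<le> t - of_int \<lfloor>t\<rfloor>" "t - of_int \<lfloor>t\<rfloor> \<le> 1" by linarith+
  then show ?thesis
    unfolding in_segment curve_def Let_def nxt_def by blast
qed

lemma curve_in_open_leg:
  assumes "t \<noteq> of_int \<lfloor>t\<rfloor>" "ps ! nat (\<lfloor>t\<rfloor> mod int (length ps)) \<noteq> nxt ps (nat (\<lfloor>t\<rfloor> mod int (length ps)))"
  shows "curve ps t \<in> open_segment (ps ! nat (\<lfloor>t\<rfloor> mod int (length ps))) (nxt ps (nat (\<lfloor>t\<rfloor> mod int (length ps))))"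
proof -
  have "0 < t - of_int \<lfloor>t\<rfloor>" "t - of_int \<lfloor>t\<rfloor> < 1"
    using assms(1) by linarith+
  then show ?thesis
    using assms(2) unfolding in_segment curve_def Let_def nxt_def by blast
qed

lemma curve_on_piece:
  assumes "ps \<noteq> []" "of_int m \<le> t" "t \<le> of_int m + 1"
  defines "j \<equiv> nat (m mod int (length ps))"
  shows "curve ps t = ps ! j + (t - of_int m) *\<^sub>R (nxt ps j - ps ! j)"
proof (cases "t = of_int m + 1")
  case True
  have "curve ps t = ps ! nat ((m + 1) mod int (length ps))"
    using True curve_of_int[of ps "m + 1"] by simp
  also have "\<dots> = nxt ps j"
    using nat_mod_succ assms(1) by (simp add: j_def nxt_conv_succ_mod)
  finally show ?thesis
    using True by simp
next
  case False
  then have "\<lfloor>t\<rfloor> = m"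
    using assms(2,3) by (simp add: floor_eq_iff)
  then show ?thesis
    by (simp add: curve_def Let_def j_def nxt_def algebra_simps)
qed

lemma curve_diff_on_piece:
  assumes "ps \<noteq> []" "t \<in> {of_int m..of_int m + 1}" "t' \<in> {of_int m..of_int m + 1}"
  defines "j \<equiv> nat (m mod int (length ps))"
  shows "curve ps t' = curve ps t + (t' - t) *\<^sub>R (nxt ps j - ps ! j)"
proof -
  let ?d = "nxt ps j - ps ! j"
  have "(t' - of_int m) *\<^sub>R ?d = (t - of_int m) *\<^sub>R ?d + (t' - t) *\<^sub>R ?d"
    by (simp add: scaleR_left_distrib[symmetric])
  then show ?thesis
    using curve_on_piece[OF assms(1), of m t] curve_on_piece[OF assms(1), of m t'] assms(2,3)
    by (simp add: j_def add.assoc)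
qed

lemma curve_before_int:
  fixes m :: int
  assumes "ps \<noteq> []" "0 \<le> \<epsilon>" "\<epsilon> \<le> 1"
  defines "j \<equiv> nat (m mod int (length ps))"
  shows "curve ps (of_int m - \<epsilon>) = ps ! j + \<epsilon> *\<^sub>R (prv ps j - ps ! j)"
proof -
  define i where "i = nat ((m - 1) mod int (length ps))"
  have j: "j < length ps"
    using assms(1) by (simp add: j_def nat_less_iff)
  have i: "i = pred_mod (length ps) j"
    using nat_mod_pred assms(1) by (simp add: i_def j_def)
  then have "nxt ps i = ps ! j"
    using j by (simp add: nxt_conv_succ_mod succ_pred_mod)
  moreover have "curve ps (of_int m - \<epsilon>) = ps ! i + (1 - \<epsilon>) *\<^sub>R (nxt ps i - ps ! i)"
    using curve_on_piece[OF assms(1), of "m - 1" "of_int m - \<epsilon>"] assms(2,3) by (simp add: i_def)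
  ultimately show ?thesis
    using i by (simp add: prv_def algebra_simps)
qed

lemma continuous_on_curve:
  assumes "ps \<noteq> []"
  shows "continuous_on S (curve ps)"
proof -
  have piece: "continuous_on {of_int m..of_int m + 1} (curve ps)" for m
  proof -
    let ?j = "nat (m mod int (length ps))"
    have "continuous_on {of_int m..of_int m + 1} (\<lambda>t. ps ! ?j + (t - of_int m) *\<^sub>R (nxt ps ?j - ps ! ?j))"
      by (intro continuous_intros)
    then show ?thesis
      by (rule continuous_on_cong[THEN iffD1, rotated 2]) (auto simp: curve_on_piece[OF assms])
  qed
  have "isCont (curve ps) t" for t
  proof -
    define m where "m = \<lfloor>t\<rfloor>"
    have "{of_int (m - 1)..of_int (m - 1) + 1} \<union> {of_int m..of_int m + 1} = {of_int m - 1..of_int m + (1::real)}"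
      by auto
    moreover have "continuous_on ({of_int (m - 1)..of_int (m - 1) + 1} \<union> {of_int m..of_int m + 1}) (curve ps)"
      by (intro continuous_on_closed_Un piece) auto
    ultimately have "continuous_on {of_int m - 1..of_int m + (1::real)} (curve ps)"
      by simp
    moreover have "t \<in> interior {of_int m - 1..of_int m + (1::real)}"
      using m_def by simp linarith
    ultimately show ?thesis
      using continuous_on_interior by blast
  qed
  then show ?thesis
    by (simp add: continuous_at_imp_continuous_on)
qed

section \<open>Plane geometry\<close>

lemma mem_closed_segment_iff_dist:
  fixes x y w :: "'a :: euclidean_space"
  shows "w \<in> closed_segment x y \<longleftrightarrow> dist x w + dist w y = dist x y"
  by (metis between between_mem_segment)

definition cross :: "point \<Rightarrow> point \<Rightarrow> real" where
  "cross u w = fst u * snd w - snd u * fst w"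

lemma cross_scaleR_left [simp]: "cross (r *\<^sub>R u) w = r * cross u w"
  by (simp add: cross_def algebra_simps)

lemma cross_scaleR_right [simp]: "cross u (r *\<^sub>R w) = r * cross u w"
  by (simp add: cross_def algebra_simps)

lemma cross_self [simp]: "cross u u = 0"
  by (simp add: cross_def)

lemma cross_skew: "cross u w = - cross w u"
  by (simp add: cross_def)

lemma cross_eq_0_iff:
  assumes "D \<noteq> 0"
  shows "cross x D = 0 \<longleftrightarrow> (\<exists>\<kappa>. x = \<kappa> *\<^sub>R D)"
proof
  assume x: "cross x D = 0"
  show "\<exists>\<kappa>. x = \<kappa> *\<^sub>R D"
  proof (cases "fst D = 0")
    case True
    then have "snd D \<noteq> 0" "fst x = 0"
      using assms x by (auto simp: prod_eq_iff cross_def)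
    then show ?thesis
      using True by (intro exI[of _ "snd x / snd D"]) (simp add: prod_eq_iff)
  next
    case False
    then have "snd x = fst x / fst D * snd D"
      using x by (simp add: cross_def field_simps)
    then show ?thesis
      using False by (intro exI[of _ "fst x / fst D"]) (simp add: prod_eq_iff)
  qed
qed auto

lemma cross_collinear:
  assumes "v \<in> closed_segment x y"
  shows "cross (x - v) (y - v) = 0"
proof -
  obtain u where v: "v = (1 - u) *\<^sub>R x + u *\<^sub>R y"
    using assms unfolding in_segment by blast
  show ?thesis
    unfolding v cross_def by (simp add: algebra_simps)
qed

lemma closed_segment_Int_eq_singleton:
  assumes z: "z \<in> closed_segment x1 y1" "z \<in> closed_segment x2 y2"
    and transversal: "cross (y1 - x1) (y2 - x2) \<noteq> 0"
  shows "closed_segment x1 y1 \<inter> closed_segment x2 y2 = {z}"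
proof -
  have "w = z" if w: "w \<in> closed_segment x1 y1" "w \<in> closed_segment x2 y2" for w
  proof -
    obtain a1 b1 a2 b2 where
      a1: "w = (1 - a1) *\<^sub>R x1 + a1 *\<^sub>R y1" and b1: "z = (1 - b1) *\<^sub>R x1 + b1 *\<^sub>R y1"
      and a2: "w = (1 - a2) *\<^sub>R x2 + a2 *\<^sub>R y2" and b2: "z = (1 - b2) *\<^sub>R x2 + b2 *\<^sub>R y2"
      using w z unfolding in_segment by metis
    have d1: "w - z = (a1 - b1) *\<^sub>R (y1 - x1)"
      unfolding a1 b1 by (simp add: algebra_simps)
    have d2: "w - z = (a2 - b2) *\<^sub>R (y2 - x2)"
      unfolding a2 b2 by (simp add: algebra_simps)
    have "(a1 - b1) * cross (y1 - x1) (y2 - x2) = cross (w - z) (y2 - x2)"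
      by (simp add: d1)
    also have "\<dots> = 0"
      by (simp add: d2)
    finally have "a1 = b1"
      using transversal by simp
    then show "w = z"
      using d1 by simp
  qed
  then show ?thesis
    using z by blast
qed

lemma closed_segment_fst_eq:
  fixes x y w w' :: point
  assumes "fst x \<noteq> fst y" "w \<in> closed_segment x y" "w' \<in> closed_segment x y" "fst w = fst w'"
  shows "w = w'"
proof -
  obtain u u' where u: "w = (1 - u) *\<^sub>R x + u *\<^sub>R y" "w' = (1 - u') *\<^sub>R x + u' *\<^sub>R y"
    using assms(2,3) unfolding in_segment by metis
  have "fst w = fst x + u * (fst y - fst x)" "fst w' = fst x + u' * (fst y - fst x)"
    unfolding u by (simp_all add: algebra_simps)
  then have "u * (fst y - fst x) = u' * (fst y - fst x)"
    using assms(4) by linarith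
  then have "u = u'"
    using assms(1) by auto
  then show ?thesis
    using u by simp
qed

lemma closed_segment_side:
  fixes x y p :: point
  assumes "\<sigma> * c \<le> \<sigma> * fst x" "\<sigma> * c \<le> \<sigma> * fst y" "p \<in> closed_segment x y"
  shows "\<sigma> * c \<le> \<sigma> * fst p"
proof -
  obtain u where u: "0 \<le> u" "u \<le> 1" "p = (1 - u) *\<^sub>R x + u *\<^sub>R y"
    using assms(3) unfolding in_segment by blast
  have "\<sigma> * fst p = (1 - u) * (\<sigma> * fst x) + u * (\<sigma> * fst y)"
    unfolding u(3) by (simp add: algebra_simps)
  moreover have "(1 - u) * (\<sigma> * c) \<le> (1 - u) * (\<sigma> * fst x)" "u * (\<sigma> * c) \<le> u * (\<sigma> * fst y)"
    using u(1,2) assms(1,2) by (simp_all add: mult_left_mono)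
  ultimately show ?thesis
    by (simp add: algebra_simps)
qed

lemma closed_segment_horizontal:
  fixes x y p :: point
  assumes "p \<in> closed_segment x y" "snd x = Y" "snd y = Y"
  shows "snd p = Y"
proof -
  obtain u where p: "p = (1 - u) *\<^sub>R x + u *\<^sub>R y"
    using assms(1) unfolding in_segment by blast
  show ?thesis
    unfolding p using assms(2,3) by (simp add: algebra_simps)
qed

lemma closed_segment_vertical:
  fixes v p :: point
  assumes "p \<in> closed_segment v (fst v, Y)"
  shows "fst p = fst v" "snd v \<le> Y \<Longrightarrow> snd v \<le> snd p" "Y \<le> snd v \<Longrightarrow> snd p \<le> snd v"
proof -
  obtain u where u: "0 \<le> u" "u \<le> 1" "p = (1 - u) *\<^sub>R v + u *\<^sub>R (fst v, Y)"
    using assms unfolding in_segment by blast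
  have "fst p = fst v" "snd p = snd v + u * (Y - snd v)"
    unfolding u(3) by (simp_all add: algebra_simps)
  then show "fst p = fst v" "snd v \<le> Y \<Longrightarrow> snd v \<le> snd p" "Y \<le> snd v \<Longrightarrow> snd p \<le> snd v"
    using u(1) by (auto simp: mult_nonneg_nonpos)
qed

lemma open_segment_vertical:
  fixes x y q :: point
  assumes "q \<in> open_segment x y" "fst x = c" "fst y = c"
  shows "fst q = c" "min (snd x) (snd y) < snd q" "snd q < max (snd x) (snd y)"
proof -
  obtain u where u: "0 < u" "u < 1" "q = (1 - u) *\<^sub>R x + u *\<^sub>R y" "x \<noteq> y"
    using assms(1) unfolding in_segment by blast
  have q: "fst q = c" "snd q = snd x + u * (snd y - snd x)"
    unfolding u(3) using assms(2,3) by (simp_all add: algebra_simps)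
  have "snd x \<noteq> snd y"
    using u(4) assms(2,3) by (auto simp: prod_eq_iff)
  then consider "snd x < snd y" | "snd y < snd x"
    by linarith
  then have "min (snd x) (snd y) < snd q \<and> snd q < max (snd x) (snd y)"
  proof cases
    case 1
    then have "0 < u * (snd y - snd x)" "u * (snd y - snd x) < snd y - snd x"
      using u(1,2) by (simp_all add: mult_less_cancel_right2)
    then show ?thesis
      using 1 q(2) by linarith
  next
    case 2
    then have "u * (snd y - snd x) < 0" "snd y - snd x < u * (snd y - snd x)"
      using u(1,2) by (simp_all add: mult_pos_neg mult_less_cancel_right1)
    then show ?thesis
      using 2 q(2) by linarith
  qed
  then show "fst q = c" "min (snd x) (snd y) < snd q" "snd q < max (snd x) (snd y)"
    using q(1) by simp_all
qed

lemma open_segment_crossing_side: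
  fixes x y q :: point
  assumes "q \<in> open_segment x y" "fst q = c" "fst x \<noteq> fst y" "\<sigma> = 1 \<or> \<sigma> = -1"
  shows "\<sigma> * c < \<sigma> * fst x \<or> \<sigma> * c < \<sigma> * fst y"
proof (rule ccontr)
  assume "\<not> ?thesis"
  then have le: "0 \<le> \<sigma> * c - \<sigma> * fst x" "0 \<le> \<sigma> * c - \<sigma> * fst y"
    by auto
  obtain u where u: "0 < u" "u < 1" "q = (1 - u) *\<^sub>R x + u *\<^sub>R y"
    using assms(1) unfolding in_segment by blast
  have "\<sigma> * c = \<sigma> * fst q"
    using assms(2) by simp
  also have "\<dots> = (1 - u) * (\<sigma> * fst x) + u * (\<sigma> * fst y)"
    unfolding u(3) by (simp add: algebra_simps)
  finally have "(1 - u) * (\<sigma> * c - \<sigma> * fst x) + u * (\<sigma> * c - \<sigma> * fst y) = 0"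
    by (simp add: algebra_simps)
  moreover have "0 \<le> (1 - u) * (\<sigma> * c - \<sigma> * fst x)" "0 \<le> u * (\<sigma> * c - \<sigma> * fst y)"
    using u(1,2) le by simp_all
  ultimately have "(1 - u) * (\<sigma> * c - \<sigma> * fst x) = 0" "u * (\<sigma> * c - \<sigma> * fst y) = 0"
    by linarith+
  then have "\<sigma> * fst x = \<sigma> * fst y"
    using u(1,2) by auto
  then show False
    using assms(3,4) by auto
qed

lemma closed_segment_direction:
  fixes x y v :: "'a::real_vector"
  assumes "v \<in> closed_segment x y"
  shows "v \<noteq> x \<Longrightarrow> \<exists>r>0. v - x = r *\<^sub>R (y - x)" "v \<noteq> y \<Longrightarrow> \<exists>r>0. y - v = r *\<^sub>R (y - x)"
proof -
  obtain u where u: "0 \<le> u" "u \<le> 1" "v = (1 - u) *\<^sub>R x + u *\<^sub>R y"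
    using assms unfolding in_segment by blast
  have "v - x = u *\<^sub>R (y - x)" "y - v = (1 - u) *\<^sub>R (y - x)"
    unfolding u(3) by (simp_all add: algebra_simps)
  then show "v \<noteq> x \<Longrightarrow> \<exists>r>0. v - x = r *\<^sub>R (y - x)" "v \<noteq> y \<Longrightarrow> \<exists>r>0. y - v = r *\<^sub>R (y - x)"
    using u by (metis diff_gt_0_iff_gt eq_iff_diff_eq_0 order_less_le scaleR_zero_left)+
qed

lemma open_segment_behind:
  fixes x y q :: "'a::real_vector"
  assumes "q \<in> open_segment x y"
  shows "\<exists>r\<le>0. x = q + r *\<^sub>R (y - q)"
proof -
  obtain u where u: "0 < u" "u < 1" "q = (1 - u) *\<^sub>R x + u *\<^sub>R y"
    using assms unfolding in_segment by blast
  have e: "y - q = (1 - u) *\<^sub>R (y - x)" "x - q = (- u) *\<^sub>R (y - x)"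
    unfolding u(3) by (simp_all add: algebra_simps)
  have "(- u / (1 - u)) *\<^sub>R (y - q) = x - q"
    using u(2) unfolding e by simp
  then have "x = q + (- u / (1 - u)) *\<^sub>R (y - q)"
    by simp
  moreover have "- u / (1 - u) \<le> 0"
    using u by simp
  ultimately show ?thesis
    by blast
qed

lemma open_segment_on_line:
  fixes x y v D :: "'a::real_vector"
  assumes "v \<in> open_segment x y" "y - x = \<kappa> *\<^sub>R D"
  shows "\<exists>u. 0 < u \<and> u < 1 \<and> x = v - (u * \<kappa>) *\<^sub>R D \<and> y = v + ((1 - u) * \<kappa>) *\<^sub>R D"
proof -
  obtain u where u: "0 < u" "u < 1" "v = (1 - u) *\<^sub>R x + u *\<^sub>R y"
    using assms(1) unfolding in_segment by blast
  have "x = v - u *\<^sub>R (y - x)" "y = v + (1 - u) *\<^sub>R (y - x)"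
    unfolding u(3) by (simp_all add: algebra_simps)
  then show ?thesis
    using u assms(2) by (intro exI[of _ u]) simp
qed

lemma closed_segment_along_line_behind:
  fixes x y q D :: "'a::real_vector"
  assumes "z \<in> closed_segment x y" "z \<noteq> x" "z \<noteq> y" "y - x = \<kappa> *\<^sub>R D" "z = q + t *\<^sub>R D"
  shows "\<exists>t'<t. x = q + t' *\<^sub>R D \<or> y = q + t' *\<^sub>R D"
proof -
  have "z \<in> open_segment x y"
    using assms(1-3) by (simp add: open_segment_def)
  then obtain u where u: "0 < u" "u < 1" "x = z - (u * \<kappa>) *\<^sub>R D" "y = z + ((1 - u) * \<kappa>) *\<^sub>R D"
    using open_segment_on_line assms(4) by blast
  have "\<kappa> \<noteq> 0"
    using u(3) assms(2) by auto
  then consider "0 < \<kappa>" | "\<kappa> < 0"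
    by linarith
  then show ?thesis
  proof cases
    case 1
    then have "x = q + (t - u * \<kappa>) *\<^sub>R D" "t - u * \<kappa> < t"
      using u(1,3) assms(5) by (simp_all add: algebra_simps)
    then show ?thesis by blast
  next
    case 2
    then have "y = q + (t + (1 - u) * \<kappa>) *\<^sub>R D" "t + (1 - u) * \<kappa> < t"
      using u(2,4) assms(5) by (simp_all add: algebra_simps mult_pos_neg)
    then show ?thesis by blast
  qed
qed

lemma closed_segment_end_on_line:
  fixes x y q D :: "'a::real_vector"
  assumes "z \<in> closed_segment x y" "z = q + t *\<^sub>R D" "x = q + t' *\<^sub>R D \<or> y = q + t' *\<^sub>R D" "t' \<noteq> t" "D \<noteq> 0"
  shows "\<exists>\<kappa>. \<kappa> \<noteq> 0 \<and> y - x = \<kappa> *\<^sub>R D"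
  using assms(3)
proof
  assume x: "x = q + t' *\<^sub>R D"
  then have "z \<noteq> x"
    using assms(2,4,5) by auto
  then obtain r where "r > 0" "z - x = r *\<^sub>R (y - x)"
    using closed_segment_direction(1)[OF assms(1)] by blast
  moreover have "z - x = (t - t') *\<^sub>R D"
    using x assms(2) by (simp add: algebra_simps)
  ultimately have "y - x = (1 / r) *\<^sub>R (z - x)"
    by simp
  then have "y - x = ((t - t') / r) *\<^sub>R D"
    using \<open>z - x = (t - t') *\<^sub>R D\<close> by simp
  then show ?thesis
    using assms(4) \<open>r > 0\<close> by (intro exI[of _ "(t - t') / r"]) simp
next
  assume y: "y = q + t' *\<^sub>R D"
  then have "z \<noteq> y"
    using assms(2,4,5) by auto
  then obtain r where "r > 0" "y - z = r *\<^sub>R (y - x)"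
    using closed_segment_direction(2)[OF assms(1)] by blast
  moreover have "y - z = (t' - t) *\<^sub>R D"
    using y assms(2) by (simp add: algebra_simps)
  ultimately have "y - x = (1 / r) *\<^sub>R (y - z)"
    by simp
  then have "y - x = ((t' - t) / r) *\<^sub>R D"
    using \<open>y - z = (t' - t) *\<^sub>R D\<close> by simp
  then show ?thesis
    using assms(4) \<open>r > 0\<close> by (intro exI[of _ "(t' - t) / r"]) simp
qed

lemma open_segment_on_ray:
  fixes q D :: "'a::real_vector"
  assumes "s' < t" "t < s" "D \<noteq> 0"
  shows "q + t *\<^sub>R D \<in> open_segment (q + s' *\<^sub>R D) (q + s *\<^sub>R D)"
proof -
  define u where "u = (t - s') / (s - s')"
  have u: "0 < u" "u < 1" "s' + u * (s - s') = t"
    using assms(1,2) by (simp_all add: u_def field_simps)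
  have "(1 - u) *\<^sub>R (q + s' *\<^sub>R D) + u *\<^sub>R (q + s *\<^sub>R D) = q + (s' + u * (s - s')) *\<^sub>R D"
    by (simp add: algebra_simps)
  then have "q + t *\<^sub>R D = (1 - u) *\<^sub>R (q + s' *\<^sub>R D) + u *\<^sub>R (q + s *\<^sub>R D)"
    using u(3) by simp
  moreover have "q + s' *\<^sub>R D \<noteq> q + s *\<^sub>R D"
    using assms by auto
  ultimately show ?thesis
    using u(1,2) unfolding in_segment by blast
qed

lemma closed_segment_on_ray:
  fixes q D p :: "'a::real_vector"
  assumes "p \<in> closed_segment q (q + s *\<^sub>R D)"
  shows "\<exists>u. 0 \<le> u \<and> u \<le> 1 \<and> p = q + (u * s) *\<^sub>R D"
proof -
  obtain u where u: "0 \<le> u" "u \<le> 1" "p = (1 - u) *\<^sub>R q + u *\<^sub>R (q + s *\<^sub>R D)"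
    using assms unfolding in_segment by blast
  have "p = q + (u * s) *\<^sub>R D"
    unfolding u(3) by (simp add: algebra_simps)
  then show ?thesis
    using u(1,2) by blast
qed

lemma first_hit_on_ray:
  fixes q D :: "'a::real_normed_vector"
  assumes "closed S" "q \<notin> S" "0 \<le> t0" "q + t0 *\<^sub>R D \<in> S"
  obtains ts where "0 < ts" "q + ts *\<^sub>R D \<in> S" "\<And>t. 0 \<le> t \<Longrightarrow> t < ts \<Longrightarrow> q + t *\<^sub>R D \<notin> S"
proof -
  define K where "K = {t. 0 \<le> t \<and> q + t *\<^sub>R D \<in> S}"
  have "K = {0..} \<inter> (\<lambda>t. q + t *\<^sub>R D) -` S"
    by (auto simp: K_def)
  moreover have "closed ((\<lambda>t. q + t *\<^sub>R D) -` S)"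
    using assms(1) by (intro continuous_closed_vimage) (auto intro!: continuous_intros)
  ultimately have "closed K"
    by auto
  moreover have "t0 \<in> K" "bdd_below K"
    using assms(3,4) by (auto simp: K_def bdd_below_def)
  ultimately have ts: "Inf K \<in> K" "\<And>t. t \<in> K \<Longrightarrow> Inf K \<le> t"
    using closed_contains_Inf cInf_lower by blast+
  show ?thesis
  proof (rule that[of "Inf K"])
    show "q + Inf K *\<^sub>R D \<in> S"
      using ts(1) by (simp add: K_def)
    show "0 < Inf K"
      using ts(1) assms(2) by (cases "Inf K = 0") (auto simp: K_def)
    show "q + t *\<^sub>R D \<notin> S" if "0 \<le> t" "t < Inf K" for t
      using that ts(2)[of t] by (auto simp: K_def)
  qed
qed

lemma ray_step:
  fixes q D u v w :: "'a::real_vector"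
  assumes u: "u = q + s' *\<^sub>R D" and v: "v = q + s *\<^sub>R D" and "s' < s" "D \<noteq> 0"
    and vw: "v \<in> closed_segment u w" "v \<noteq> w"
  shows "\<exists>s2>s. w = q + s2 *\<^sub>R D"
proof -
  obtain \<theta> where th: "0 \<le> \<theta>" "\<theta> \<le> 1" "v = (1 - \<theta>) *\<^sub>R u + \<theta> *\<^sub>R w"
    using vw(1) unfolding in_segment by blast
  have "u \<noteq> v"
    using u v assms(3,4) by auto
  then have "\<theta> \<noteq> 0"
    using th by auto
  have "v - u = \<theta> *\<^sub>R (w - u)"
    using th by (simp add: algebra_simps)
  then have "w = u + (1 / \<theta>) *\<^sub>R (v - u)"
    using \<open>\<theta> \<noteq> 0\<close> by simp
  then have w: "w = q + (s' + (s - s') / \<theta>) *\<^sub>R D"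
    using u v by (simp add: algebra_simps scaleR_diff_left diff_divide_distrib)
  have "s - s' \<le> (s - s') / \<theta>"
    using th \<open>\<theta> \<noteq> 0\<close> assms(3) by (simp add: le_divide_eq mult_left_le_one_le)
  moreover have "s' + (s - s') / \<theta> \<noteq> s"
    using w v vw(2) by auto
  ultimately show ?thesis
    using w by (intro exI[of _ "s' + (s - s') / \<theta>"]) auto
qed

section \<open>Paths on one side of a vertical line\<close>

lemma bounded_coords:
  assumes "bounded (S :: point set)"
  obtains B where "B \<ge> 0" "\<And>x. x \<in> S \<Longrightarrow> \<bar>fst x\<bar> \<le> B \<and> \<bar>snd x\<bar> \<le> B"
proof -
  obtain B where B: "B > 0" "\<And>x. x \<in> S \<Longrightarrow> norm x \<le> B"
    using assms bounded_pos by blast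
  have "\<bar>fst x\<bar> \<le> B \<and> \<bar>snd x\<bar> \<le> B" if "x \<in> S" for x
    using B(2)[OF that] norm_fst_le[of "fst x" "snd x"] norm_snd_le[of "snd x" "fst x"] by simp
  then show ?thesis
    using B(1) that[of B] by simp
qed

text \<open>The map \<open>(x, y) \<mapsto> (y, \<sigma> x)\<close> sends the half-plane \<open>\<sigma> x \<ge> \<sigma> c\<close> into a box of
  \<^typ>\<open>real^2\<close> whose bottom edge is the image of the line \<open>x = c\<close>; there Fashoda's
  interlacing theorem applies.\<close>

lemma halfplane_interlaced_paths_meet:
  fixes f g :: "real \<Rightarrow> point"
  assumes "path f" "path g" and \<sigma>: "\<sigma> = 1 \<or> \<sigma> = -1"
    and side: "\<forall>x\<in>path_image f \<union> path_image g. \<sigma> * c \<le> \<sigma> * fst x"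
    and ends: "fst (pathstart f) = c" "fst (pathfinish f) = c" "fst (pathstart g) = c" "fst (pathfinish g) = c"
    and interlaced: "snd (pathstart f) < snd (pathstart g)" "snd (pathstart g) < snd (pathfinish f)"
      "snd (pathfinish f) < snd (pathfinish g)"
  shows "path_image f \<inter> path_image g \<noteq> {}"
proof -
  define \<phi> :: "point \<Rightarrow> real^2" where "\<phi> p = (\<chi> i. if i = 1 then snd p else \<sigma> * fst p)" for p
  have \<phi>_nth [simp]: "\<phi> p $ 1 = snd p" "\<phi> p $ 2 = \<sigma> * fst p" for p
    by (simp_all add: \<phi>_def)
  have "continuous_on S \<phi>" for S
  proof -
    have "continuous_on S (\<lambda>p::point. if i = 1 then snd p else \<sigma> * fst p)" for i :: 2
      by (cases "i = 1") (simp_all add: continuous_on_snd continuous_on_fst continuous_on_mult_left continuous_on_id)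
    then show ?thesis
      unfolding \<phi>_def by (rule continuous_on_vec_lambda)
  qed
  then have paths: "path (\<phi> \<circ> f)" "path (\<phi> \<circ> g)"
    using assms(1,2) path_continuous_image by blast+
  obtain B where B: "\<And>x. x \<in> path_image f \<union> path_image g \<Longrightarrow> \<bar>fst x\<bar> \<le> B \<and> \<bar>snd x\<bar> \<le> B"
    using bounded_coords compact_imp_bounded compact_Un compact_path_image assms(1,2) by metis
  define a :: "real^2" where "a = (\<chi> i. if i = 1 then - B else \<sigma> * c)"
  define b :: "real^2" where "b = (\<chi> i. B)"
  have "\<phi> x \<in> cbox a b" if "x \<in> path_image f \<union> path_image g" for x
    using B[OF that] side that \<sigma> unfolding mem_box_cart forall_2
    by (auto simp: a_def b_def abs_le_iff)
  then have boxed: "path_image (\<phi> \<circ> f) \<subseteq> cbox a b" "path_image (\<phi> \<circ> g) \<subseteq> cbox a b"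
    by (auto simp: path_image_compose)
  obtain z where "z \<in> path_image (\<phi> \<circ> f)" "z \<in> path_image (\<phi> \<circ> g)"
    by (rule fashoda_interlace[OF paths boxed])
      (use ends interlaced in \<open>simp_all add: a_def pathstart_compose pathfinish_compose\<close>)
  then obtain x y where xy: "x \<in> path_image f" "y \<in> path_image g" "\<phi> x = \<phi> y"
    by (auto simp: path_image_compose)
  then have "snd x = snd y" "\<sigma> * fst x = \<sigma> * fst y"
    by (metis \<phi>_nth)+
  then have "x = y"
    using \<sigma> by (auto simp: prod_eq_iff)
  then show ?thesis
    using xy by blast
qed

text \<open>Closed up by a horizontal segment back to the line \<open>x = c\<close>, the hook from \<open>q\<close> via \<open>v\<close> to
  \<open>(fst v, Y)\<close> is a path interlaced with \<open>A\<close>, and beyond \<open>Y\<close> it cannot meet \<open>A\<close>.\<close>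

lemma path_meets_hook:
  fixes A :: "real \<Rightarrow> point"
  assumes A: "path A" and \<sigma>: "\<sigma> = 1 \<or> \<sigma> = -1"
    and side: "\<forall>x\<in>path_image A. \<sigma> * c \<le> \<sigma> * fst x"
    and ends: "fst (pathstart A) = c" "fst (pathfinish A) = c"
    and q: "fst q = c" "min (snd (pathstart A)) (snd (pathfinish A)) < snd q"
      "snd q < max (snd (pathstart A)) (snd (pathfinish A))"
    and v: "\<sigma> * c \<le> \<sigma> * fst v"
    and Y: "(\<forall>x\<in>path_image A. snd x < Y) \<or> (\<forall>x\<in>path_image A. Y < snd x)"
  shows "\<exists>p\<in>path_image A. p \<in> closed_segment q v \<or> p \<in> closed_segment v (fst v, Y)"
proof -
  define g where "g = linepath q v +++ linepath v (fst v, Y) +++ linepath (fst v, Y) (c, Y)"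
  have g: "path g" "pathstart g = q" "pathfinish g = (c, Y)"
    by (simp_all add: g_def)
  have g_image: "path_image g = closed_segment q v \<union> closed_segment v (fst v, Y) \<union> closed_segment (fst v, Y) (c, Y)"
    unfolding g_def by (simp add: path_image_join Un_assoc)
  have g_side: "\<forall>x\<in>path_image g. \<sigma> * c \<le> \<sigma> * fst x"
    using closed_segment_side[of \<sigma> c q v] closed_segment_side[of \<sigma> c v "(fst v, Y)"]
      closed_segment_side[of \<sigma> c "(fst v, Y)" "(c, Y)"] q(1) v
    unfolding g_image by auto
  define A' where "A' = (if snd (pathstart A) < snd (pathfinish A) then A else reversepath A)"
  have A': "path A'" "path_image A' = path_image A"
    "snd (pathstart A') = min (snd (pathstart A)) (snd (pathfinish A))"
    "snd (pathfinish A') = max (snd (pathstart A)) (snd (pathfinish A))"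
    "fst (pathstart A') = c" "fst (pathfinish A') = c"
    using A q ends by (auto simp: A'_def path_image_reversepath min_def max_def)
  have ends_in: "pathstart A' \<in> path_image A" "pathfinish A' \<in> path_image A"
    using A'(2) by auto
  obtain z where z: "z \<in> path_image A" "z \<in> path_image g"
  proof (cases "\<forall>x\<in>path_image A. snd x < Y")
    case True
    have "path_image A' \<inter> path_image g \<noteq> {}"
      by (rule halfplane_interlaced_paths_meet[OF A'(1) g(1) \<sigma>])
        (use side g_side A' g q ends_in True in auto)
    then show ?thesis
      using that A'(2) by blast
  next
    case False
    then have below: "\<forall>x\<in>path_image A. Y < snd x"
      using Y by blast
    have "path_image (reversepath g) \<inter> path_image A' \<noteq> {}"
      by (rule halfplane_interlaced_paths_meet[OF _ A'(1) \<sigma>])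
        (use side g_side A' g q ends_in below in \<open>auto simp: path_image_reversepath\<close>)
    then show ?thesis
      using that A'(2) by (auto simp: path_image_reversepath)
  qed
  moreover have "z \<notin> closed_segment (fst v, Y) (c, Y)"
    using closed_segment_horizontal[of z "(fst v, Y)" "(c, Y)" Y] Y z(1) by auto
  ultimately show ?thesis
    using g_image by blast
qed

section \<open>Local optimality\<close>

abbreviation straight_vertex :: "point list \<Rightarrow> nat \<Rightarrow> bool" where
  "straight_vertex ps k \<equiv> ps ! k \<in> closed_segment (prv ps k) (nxt ps k)"

lemma cost_split:
  "A \<noteq> [] \<Longrightarrow> B \<noteq> [] \<Longrightarrow>
    cost (v # A @ B) = dist v (hd A) + polyline_length A + dist (last A) (hd B) + polyline_length B + dist (last B) v"
  by (simp add: cost_Cons polyline_length_append)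

lemma split_list_at_nth:
  assumes i: "0 < i" "i + 1 < length xs"
  obtains A B where "xs = hd xs # A @ B" "A \<noteq> []" "B \<noteq> []"
    "hd A = xs ! 1" "last A = xs ! i" "hd B = xs ! (i + 1)" "last B = last xs"
proof -
  obtain x rest where xs: "xs = x # rest"
    using i by (cases xs) auto
  then have rest: "i < length rest" "rest \<noteq> []"
    using i by auto
  show ?thesis
  proof (rule that[of "take i rest" "drop i rest"])
    show "xs = hd xs # take i rest @ drop i rest" "take i rest \<noteq> []" "drop i rest \<noteq> []"
      using xs i rest by auto
    show "hd (take i rest) = xs ! 1"
      using xs i rest(2) by (simp add: hd_conv_nth)
    have "last (take i rest) = take i rest ! (i - 1)"
      using i rest(1) by (subst last_conv_nth) auto
    then show "last (take i rest) = xs ! i"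
      using xs i by (simp add: nth_Cons')
    show "hd (drop i rest) = xs ! (i + 1)"
      using xs rest(1) by (simp add: hd_drop_conv_nth)
    show "last (drop i rest) = last xs"
      using xs rest by simp
  qed
qed

lemma rotate_split_at_leg:
  fixes ps :: "point list"
  assumes k: "k < length ps" and j: "j < length ps" and kj: "ps ! k \<noteq> ps ! j" "ps ! k \<noteq> nxt ps j"
  obtains A B where "rotate k ps = ps ! k # A @ B" "A \<noteq> []" "B \<noteq> []"
    "last A = ps ! j" "hd B = nxt ps j" "hd A = nxt ps k" "last B = prv ps k"
proof -
  define n where "n = length ps"
  define qs where "qs = rotate k ps"
  have n0: "0 < n"
    using k unfolding n_def by linarith
  have qs_nth: "qs ! r = ps ! ((k + r) mod n)" if "r < n" for r
    using that n0 unfolding qs_def n_def by (subst nth_rotate) (auto simp: add.commute)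
  define i where "i = (j + n - k) mod n"
  have i: "i < n" "(k + i) mod n = j"
    using n0 j k by (auto simp: i_def n_def mod_add_right_eq)
  then have i_Suc: "(k + (i + 1)) mod n = (j + 1) mod n"
    by (metis add.assoc mod_add_left_eq)
  have hd_qs: "hd qs = ps ! k"
    using qs_nth[of 0] n0 k by (simp add: hd_conv_nth qs_def n_def)
  have "i \<noteq> 0"
  proof
    assume "i = 0"
    then have "j = k"
      using i(2) k by (simp add: n_def)
    then show False
      using kj(1) by simp
  qed
  moreover have "i + 1 \<noteq> n"
  proof
    assume "i + 1 = n"
    then have "k + (i + 1) = k + n"
      by simp
    then have "(j + 1) mod n = k"
      using i_Suc k by (simp add: n_def)
    then show False
      using kj(2) by (simp add: nxt_def n_def)
  qed
  ultimately obtain A B where AB: "qs = hd qs # A @ B" "A \<noteq> []" "B \<noteq> []"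
    "hd A = qs ! 1" "last A = qs ! i" "hd B = qs ! (i + 1)" "last B = last qs"
    using split_list_at_nth[of i qs] i(1) by (auto simp: qs_def n_def)
  show ?thesis
  proof (rule that[OF _ AB(2,3)])
    show "rotate k ps = ps ! k # A @ B"
      using AB(1) hd_qs by (simp add: qs_def)
    show "last A = ps ! j" "hd B = nxt ps j"
      using AB(5,6) qs_nth i i_Suc \<open>i + 1 \<noteq> n\<close> by (simp_all add: nxt_def n_def)
    show "hd A = nxt ps k"
      using AB(4) qs_nth[of 1] \<open>i \<noteq> 0\<close> i(1) by (simp add: nxt_def n_def add.commute)
    have "last qs = qs ! (n - 1)"
      using n0 by (simp add: last_conv_nth qs_def n_def)
    then show "last B = prv ps k"
      using AB(7) qs_nth[of "n - 1"] n0 by (simp add: prv_def pred_mod_def n_def)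
  qed
qed

locale optimal_tour =
  fixes P :: "point set" and ps :: "point list"
  assumes inj_fst: "inj_on fst P"
    and tour: "is_tour P ps"
    and optimal: "\<And>qs. is_tour P qs \<Longrightarrow> cost ps \<le> cost qs"
begin

lemma ps_ne: "ps \<noteq> []"
  using tour by (simp add: is_tour_def)

lemma distinct_ps: "distinct ps"
  using is_tour_distinct[OF tour] .

lemma nth_eq_iff: "i < length ps \<Longrightarrow> j < length ps \<Longrightarrow> ps ! i = ps ! j \<longleftrightarrow> i = j"
  using distinct_ps by (simp add: nth_eq_iff_index_eq)

lemma fst_nth_eq_iff: "i < length ps \<Longrightarrow> j < length ps \<Longrightarrow> fst (ps ! i) = fst (ps ! j) \<longleftrightarrow> i = j"
  using is_tour_fst_eq[OF inj_fst tour] nth_eq_iff by (meson nth_mem)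

lemma vertex_on_vseg: "k < length ps \<Longrightarrow> \<exists>b\<in>P. ps ! k \<in> vseg b"
  using is_tour_on_vseg[OF tour] by simp

lemma fst_nxt_neq:
  assumes "2 \<le> length ps" "j < length ps"
  shows "fst (nxt ps j) \<noteq> fst (ps ! j)"
proof -
  have "succ_mod (length ps) j < length ps" "succ_mod (length ps) j \<noteq> j"
    using succ_mod_less[of "length ps" j] succ_mod_neq[OF assms] ps_ne by auto
  then show ?thesis
    unfolding nxt_conv_succ_mod using fst_nth_eq_iff assms(2) by blast
qed

lemma nxt_neq: "2 \<le> length ps \<Longrightarrow> j < length ps \<Longrightarrow> nxt ps j \<noteq> ps ! j"
  using fst_nxt_neq by metis

lemma prv_neq:
  assumes "2 \<le> length ps" "j < length ps"
  shows "prv ps j \<noteq> ps ! j"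
proof -
  have "pred_mod (length ps) j < length ps" "pred_mod (length ps) j \<noteq> j"
    using pred_mod_less[of "length ps" j] pred_mod_neq[OF assms] ps_ne by auto
  then show ?thesis
    unfolding prv_def using nth_eq_iff assms(2) by blast
qed

lemma leg_point_eq_end:
  assumes j: "j < length ps" and w: "w \<in> closed_segment (ps ! j) (nxt ps j)"
    and p: "p = ps ! j \<or> p = nxt ps j" and "fst w = fst p"
  shows "w = p"
proof (cases "length ps = 1")
  case True
  then show ?thesis
    using j w p by (simp add: nxt_def)
next
  case False
  then have "fst (ps ! j) \<noteq> fst (nxt ps j)"
    using j fst_nxt_neq by force
  moreover have "p \<in> closed_segment (ps ! j) (nxt ps j)"
    using p by auto
  ultimately show ?thesis
    using closed_segment_fst_eq[OF _ w _ assms(4)] by blast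
qed

text \<open>Relocation: moving the tour point of a segment onto a leg it meets saves the two legs at the
  vertex and costs their shortcut, so optimality makes the vertex straight.\<close>

lemma straight_vertex_if_relocatable:
  assumes k: "k < length ps" and j: "j < length ps" and kj: "ps ! k \<noteq> ps ! j" "ps ! k \<noteq> nxt ps j"
    and b: "b \<in> P" "ps ! k \<in> vseg b" "w \<in> vseg b" and w: "w \<in> closed_segment (ps ! j) (nxt ps j)"
  shows "straight_vertex ps k"
proof -
  let ?v = "ps ! k"
  obtain A B where split: "rotate k ps = ?v # A @ B" "A \<noteq> []" "B \<noteq> []"
    "last A = ps ! j" "hd B = nxt ps j" "hd A = nxt ps k" "last B = prv ps k"
    using rotate_split_at_leg[OF k j kj] by blast
  have AB: "distinct (?v # A @ B)" "set (?v # A @ B) = set ps"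
    using distinct_ps split(1) by (metis distinct_rotate set_rotate)+
  have "w \<notin> set (A @ B)"
  proof
    assume "w \<in> set (A @ B)"
    then have "w \<in> set ps"
      using AB(2) by auto
    moreover have "fst w = fst ?v"
      using b by (simp add: mem_vseg_iff)
    ultimately have "w = ?v"
      using is_tour_fst_eq[OF inj_fst tour _ nth_mem[OF k]] by blast
    then show False
      using \<open>w \<in> set (A @ B)\<close> AB(1) by simp
  qed
  then have "distinct (A @ w # B)" "set (A @ w # B) = insert w (set ps - {?v})"
    using AB by auto
  then have "is_tour P (A @ w # B)"
    by (rule is_tour_replace[OF inj_fst tour b nth_mem[OF k]])
  then have "cost ps \<le> cost (A @ w # B)"
    by (rule optimal)
  moreover have "cost (A @ w # B) = polyline_length A + dist (ps ! j) (nxt ps j) + polyline_length B + dist (prv ps k) (nxt ps k)"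
    using split(2-7) mem_closed_segment_iff_dist[THEN iffD1, OF w]
    by (simp add: cost_eq_polyline_length polyline_length_append polyline_length_Cons hd_append)
  moreover have "cost ps = dist ?v (nxt ps k) + polyline_length A + dist (ps ! j) (nxt ps j) + polyline_length B + dist (prv ps k) ?v"
    using cost_split[OF split(2,3), of ?v] split cost_rotate[of k ps] by (simp add: dist_commute)
  ultimately have "dist (prv ps k) ?v + dist ?v (nxt ps k) \<le> dist (prv ps k) (nxt ps k)"
    by simp
  then show ?thesis
    using dist_triangle[of "prv ps k" "nxt ps k" ?v] mem_closed_segment_iff_dist by force
qed

lemma straight_vertex_if_vseg_meets_leg:
  assumes k: "k < length ps" and j: "j < length ps"
    and b: "b \<in> P" "ps ! k \<in> vseg b" "w \<in> vseg b" and w: "w \<in> closed_segment (ps ! j) (nxt ps j)"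
    and "w \<noteq> ps ! k"
  shows "straight_vertex ps k"
proof (rule straight_vertex_if_relocatable[OF k j _ _ b w])
  have "fst w = fst (ps ! k)"
    using b by (simp add: mem_vseg_iff)
  then show "ps ! k \<noteq> ps ! j" "ps ! k \<noteq> nxt ps j"
    using leg_point_eq_end[OF j w] assms(7) by metis+
qed

text \<open>Otherwise the 2-opt move replacing leg \<open>j\<close> and the leg from vertex \<open>k\<close> to its successor by
  the legs from vertex \<open>k\<close> to \<^term>\<open>ps ! j\<close> and from its successor to \<^term>\<open>nxt ps j\<close> would shorten
  the tour.\<close>

lemma straight_vertex_on_open_leg:
  assumes k: "k < length ps" and j: "j < length ps"
    and straight: "straight_vertex ps k" and on_leg: "ps ! k \<in> open_segment (ps ! j) (nxt ps j)"
  shows "cross (nxt ps k - prv ps k) (nxt ps j - ps ! j) = 0"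
proof -
  let ?v = "ps ! k" and ?x = "ps ! j" and ?y = "nxt ps j" and ?w = "nxt ps k"
  have kj: "?v \<noteq> ?x" "?v \<noteq> ?y"
    using on_leg by (auto simp: open_segment_def)
  obtain A B where split: "rotate k ps = ?v # A @ B" "A \<noteq> []" "B \<noteq> []"
    "last A = ?x" "hd B = ?y" "hd A = ?w" "last B = prv ps k"
    using rotate_split_at_leg[OF k j kj] by blast
  have "distinct (?v # A @ B)" "set (?v # A @ B) = set ps"
    using distinct_ps split(1) by (metis distinct_rotate set_rotate)+
  then have "distinct (?v # rev A @ B)" "set (?v # rev A @ B) = set ps"
    by auto
  then have "cost ps \<le> cost (?v # rev A @ B)"
    using optimal is_tour_perm[OF tour] by blast
  moreover have "cost (?v # rev A @ B) = dist ?v ?x + polyline_length A + dist ?w ?y + polyline_length B + dist (prv ps k) ?v"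
    using cost_split[of "rev A" B ?v] split by (simp add: polyline_length_rev hd_rev last_rev)
  moreover have "cost ps = dist ?v ?w + polyline_length A + dist ?x ?y + polyline_length B + dist (prv ps k) ?v"
    using cost_split[OF split(2,3), of ?v] split cost_rotate[of k ps] by simp
  moreover have "dist ?x ?y = dist ?x ?v + dist ?v ?y"
    using on_leg mem_closed_segment_iff_dist[of ?v ?x ?y] by (simp add: open_segment_def)
  ultimately have "dist ?w ?v + dist ?v ?y \<le> dist ?w ?y"
    by (simp add: dist_commute)
  then have "?v \<in> closed_segment ?w ?y"
    using dist_triangle[of ?w ?y ?v] mem_closed_segment_iff_dist by force
  then have "cross (?w - ?v) (?y - ?v) = 0"
    by (rule cross_collinear)
  moreover have "2 \<le> length ps"
    using k j kj(1) by (metis One_nat_def Suc_1 Suc_leI less_one nat_less_le not_less_eq)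
  then have "?w \<noteq> ?v"
    using nxt_neq k by blast
  then obtain r1 where "r1 > 0" "?w - ?v = r1 *\<^sub>R (?w - prv ps k)"
    using closed_segment_direction(2)[OF straight] by (metis neq_iff)
  moreover obtain r2 where "r2 > 0" "?y - ?v = r2 *\<^sub>R (?y - ?x)"
    using closed_segment_direction(2)[of ?v ?x ?y] on_leg kj by (auto simp: open_segment_def)
  ultimately show ?thesis
    by simp
qed

lemma vertex_on_open_leg:
  assumes k: "k < length ps" and j: "j < length ps" and on_leg: "ps ! k \<in> open_segment (ps ! j) (nxt ps j)"
  shows "straight_vertex ps k" "cross (nxt ps k - prv ps k) (nxt ps j - ps ! j) = 0"
proof -
  obtain b where b: "b \<in> P" "ps ! k \<in> vseg b"
    using vertex_on_vseg[OF k] by blast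
  show straight: "straight_vertex ps k"
    using straight_vertex_if_relocatable[OF k j _ _ b b(2)] on_leg by (auto simp: open_segment_def)
  show "cross (nxt ps k - prv ps k) (nxt ps j - ps ! j) = 0"
    by (rule straight_vertex_on_open_leg[OF k j straight on_leg])
qed

end

section \<open>Following the ray from \<open>q\<close>\<close>

lemma walk_along_ray:
  fixes f g :: "nat \<Rightarrow> nat" and x :: "nat \<Rightarrow> 'a::real_vector"
  assumes K: "k1 \<in> K" "\<And>k. k \<in> K \<Longrightarrow> f k \<in> K" "\<And>k. k \<in> K \<Longrightarrow> g (f k) = k"
    and cycle: "(f ^^ N) k1 = k1" "0 < N"
    and start: "x k1 = q + D" "x (g k1) = q + lam *\<^sub>R D" "lam \<le> 0" "0 < ts" "D \<noteq> 0"
    and straight: "\<And>k s. k \<in> K \<Longrightarrow> x k = q + s *\<^sub>R D \<Longrightarrow> 0 < s \<Longrightarrow> s < ts \<Longrightarrow>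
      x k \<in> closed_segment (x (g k)) (x (f k)) \<and> x (f k) \<noteq> x k"
  obtains k s' s where "k \<in> K" "x (g k) = q + s' *\<^sub>R D" "x k = q + s *\<^sub>R D" "s' < ts" "ts \<le> s"
proof (rule ccontr)
  assume no_exit: "\<not> thesis"
  define idx where "idx r = (f ^^ r) k1" for r
  have idx_K: "idx r \<in> K" for r
    by (induction r) (simp_all add: idx_def K)
  have "\<exists>s' s. x (g (idx r)) = q + s' *\<^sub>R D \<and> x (idx r) = q + s *\<^sub>R D \<and> s' < s \<and> 1 \<le> s \<and> s < ts
      \<and> (0 < r \<longrightarrow> 1 < s)" for r
  proof (induction r)
    case 0
    have "\<not> ts \<le> 1"
      using that[OF K(1) start(2), of 1] start no_exit by auto
    then show ?case
      using start by (intro exI[of _ lam] exI[of _ 1]) (simp add: idx_def)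
  next
    case (Suc r)
    then obtain s' s where ih: "x (g (idx r)) = q + s' *\<^sub>R D" "x (idx r) = q + s *\<^sub>R D" "s' < s"
      "1 \<le> s" "s < ts"
      by blast
    have step: "x (idx r) \<in> closed_segment (x (g (idx r))) (x (f (idx r)))" "x (f (idx r)) \<noteq> x (idx r)"
      using straight[OF idx_K ih(2)] ih(4,5) by auto
    obtain s2 where s2: "s < s2" "x (f (idx r)) = q + s2 *\<^sub>R D"
      using ray_step[OF ih(1,2,3) start(5) step(1)] step(2) by metis
    have idx_Suc: "idx (Suc r) = f (idx r)"
      by (simp add: idx_def)
    have idx_back: "g (idx (Suc r)) = idx r"
      using K(3)[OF idx_K] idx_Suc by simp
    have "\<not> ts \<le> s2"
      using that[OF idx_K[of "Suc r"], of s s2] no_exit ih(2,5) s2 idx_Suc idx_back by auto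
    then show ?case
      using ih s2 idx_Suc idx_back by (intro exI[of _ s] exI[of _ s2]) auto
  qed
  from this[of N] obtain s where s: "x (idx N) = q + s *\<^sub>R D" "1 < s"
    using cycle(2) by blast
  moreover have "idx N = k1"
    using cycle(1) by (simp add: idx_def)
  ultimately have "(s - 1) *\<^sub>R D = 0"
    using start(1) by (simp add: algebra_simps)
  then show False
    using s(2) start(5) by simp
qed

text \<open>The configuration to be refuted: \<open>L1\<close> is the subpath of the statement and \<open>q\<close> a further
  point of \<open>OPT\<^sub>\<tau>\<close> on \<open>\<Gamma>\<close> between \<open>p1\<close> and \<open>p2\<close>.\<close>

locale excursion = optimal_tour +
  fixes \<tau> :: nat and c a b :: real and p1 p2 q :: point
  assumes non_self_crossing: "non_self_crossing ps"
    and p1_neq_p2: "p1 \<noteq> p2" and fst_p1: "fst p1 = c" and fst_p2: "fst p2 = c"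
    and a_le_b: "a \<le> b" and curve_a: "curve ps a = p1" and curve_b: "curve ps b = p2"
    and in_strip: "curve ps ` {a..b} \<subseteq> strip P \<tau>"
    and off_line: "\<forall>t\<in>{a<..<b}. fst (curve ps t) \<noteq> c"
    and q_between: "q \<in> open_segment p1 p2"
    and q_on_tour: "q \<in> range (curve ps)"
begin

abbreviation "L1 \<equiv> curve ps ` {a..b}"

lemma length_ge_2: "2 \<le> length ps"
proof (rule ccontr)
  assume "\<not> 2 \<le> length ps"
  then have "length ps = 1"
    using ps_ne by (cases "length ps") auto
  then have "curve ps t = ps ! 0" for t
    by (simp add: curve_def Let_def algebra_simps)
  then show False
    using curve_a curve_b p1_neq_p2 by metis
qed

lemma L1_compact: "compact L1"
  using continuous_on_curve[OF ps_ne] by (intro compact_continuous_image) auto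

lemma L1_on_line: "x \<in> L1 \<Longrightarrow> fst x = c \<Longrightarrow> x = p1 \<or> x = p2"
  using off_line curve_a curve_b by fastforce

lemma q_on_line: "fst q = c"
  and q_strictly_between: "min (snd p1) (snd p2) < snd q" "snd q < max (snd p1) (snd p2)"
  using open_segment_vertical[OF q_between fst_p1 fst_p2] by simp_all

lemma q_notin_L1: "q \<notin> L1"
proof
  assume "q \<in> L1"
  then have "q = p1 \<or> q = p2"
    using L1_on_line q_on_line by blast
  then show False
    using q_between by (auto simp: open_segment_def)
qed

lemma L1_height:
  assumes "x \<in> L1" "y \<in> L1"
  shows "snd x - snd y \<le> 1"
proof -
  have "snd x \<le> cover_y P \<tau>" "cover_y P (\<tau> + 1) \<le> snd y"
    using assms in_strip by (auto simp: strip_def)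
  then show ?thesis
    by (simp add: cover_y_def)
qed

lemma L1_leg:
  assumes "x \<in> L1"
  obtains j where "j < length ps" "x \<in> closed_segment (ps ! j) (nxt ps j)"
proof -
  obtain t where "x = curve ps t"
    using assms by blast
  moreover have "nat (\<lfloor>t\<rfloor> mod int (length ps)) < length ps"
    using ps_ne by (simp add: nat_less_iff)
  ultimately show ?thesis
    using that curve_in_leg by blast
qed

lemma L1_path:
  "path (curve ps \<circ> linepath a b)" "path_image (curve ps \<circ> linepath a b) = L1"
  "pathstart (curve ps \<circ> linepath a b) = p1" "pathfinish (curve ps \<circ> linepath a b) = p2"
proof -
  show "path (curve ps \<circ> linepath a b)"
    unfolding path_def
    by (intro continuous_on_compose continuous_on_curve[OF ps_ne]) (simp add: linepath_def continuous_intros)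
  show "path_image (curve ps \<circ> linepath a b) = L1"
    using a_le_b by (simp add: path_image_compose closed_segment_eq_real_ivl)
  show "pathstart (curve ps \<circ> linepath a b) = p1" "pathfinish (curve ps \<circ> linepath a b) = p2"
    using curve_a curve_b by (simp_all add: pathstart_compose pathfinish_compose)
qed

lemma side_exists: "\<exists>\<sigma>. (\<sigma> = 1 \<or> \<sigma> = -1) \<and> (\<forall>t\<in>{a<..<b}. \<sigma> * c < \<sigma> * fst (curve ps t))"
proof -
  define h where "h t = fst (curve ps t) - c" for t
  have h_cont: "continuous_on S h" for S
    unfolding h_def by (intro continuous_intros continuous_on_curve[OF ps_ne])
  have h_nonzero: "h t \<noteq> 0" if "t \<in> {a<..<b}" for t
    using off_line that by (simp add: h_def)
  have ab: "a < b"
    using a_le_b curve_a curve_b p1_neq_p2 by (cases "a = b") auto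
  define m where "m = (a + b) / 2"
  have m: "m \<in> {a<..<b}"
    using ab by (simp add: m_def)
  define \<sigma> :: real where "\<sigma> = (if h m > 0 then 1 else -1)"
  have "0 < \<sigma> * h t" if t: "t \<in> {a<..<b}" for t
  proof (rule ccontr)
    assume "\<not> 0 < \<sigma> * h t"
    then have "h t < 0 \<and> 0 < h m \<or> 0 < h t \<and> h m < 0"
      using h_nonzero[OF t] h_nonzero[OF m] by (auto simp: \<sigma>_def split: if_splits)
    then obtain y where "min t m \<le> y" "y \<le> max t m" "h y = 0"
      using IVT'[of h t 0 m, OF _ _ _ h_cont] IVT2'[of h m 0 t, OF _ _ _ h_cont]
        IVT'[of h m 0 t, OF _ _ _ h_cont] IVT2'[of h t 0 m, OF _ _ _ h_cont]
      by (cases "t \<le> m") (auto simp: min_def max_def)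
    moreover have "y \<in> {a<..<b}"
      using calculation t m by auto
    ultimately show False
      using h_nonzero by blast
  qed
  then show ?thesis
    by (intro exI[of _ \<sigma>]) (auto simp: \<sigma>_def h_def algebra_simps)
qed

lemma L1_side:
  assumes "\<forall>t\<in>{a<..<b}. \<sigma> * c < \<sigma> * fst (curve ps t)" "x \<in> L1"
  shows "\<sigma> * c \<le> \<sigma> * fst x"
proof -
  obtain t where t: "t \<in> {a..b}" "x = curve ps t"
    using assms(2) by blast
  then consider "t = a" | "t = b" | "t \<in> {a<..<b}"
    by fastforce
  then show ?thesis
    using assms(1) t curve_a curve_b fst_p1 fst_p2 by cases (auto intro: less_imp_le)
qed

lemma L1_meets_hook:
  assumes \<sigma>: "\<sigma> = 1 \<or> \<sigma> = -1" and side: "\<forall>t\<in>{a<..<b}. \<sigma> * c < \<sigma> * fst (curve ps t)"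
    and v: "\<sigma> * c \<le> \<sigma> * fst v" and Y: "(\<forall>x\<in>L1. snd x < Y) \<or> (\<forall>x\<in>L1. Y < snd x)"
  shows "\<exists>p\<in>L1. p \<in> closed_segment q v \<or> p \<in> closed_segment v (fst v, Y)"
  unfolding L1_path(2)[symmetric]
proof (rule path_meets_hook[OF L1_path(1) \<sigma>])
  show "\<forall>x\<in>path_image (curve ps \<circ> linepath a b). \<sigma> * c \<le> \<sigma> * fst x"
    using L1_side[OF side] unfolding L1_path(2) by blast
  show "(\<forall>x\<in>path_image (curve ps \<circ> linepath a b). snd x < Y) \<or>
      (\<forall>x\<in>path_image (curve ps \<circ> linepath a b). Y < snd x)"
    using Y unfolding L1_path(2) by blast
qed (use v L1_path(3,4) fst_p1 fst_p2 q_on_line q_strictly_between in simp_all)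

lemma L1_bounds:
  obtains B where "0 \<le> B" "\<And>x. x \<in> L1 \<Longrightarrow> \<bar>fst x\<bar> \<le> B \<and> \<bar>snd x\<bar> \<le> B"
  using bounded_coords[OF compact_imp_bounded[OF L1_compact]] by blast

text \<open>As \<open>L1\<close> has height at most one, the unit segment of such a vertex reaches \<open>L1\<close>, hence a leg.\<close>

lemma straight_if_L1_above_below:
  assumes k: "k < length ps" and v: "ps ! k \<notin> L1"
    and pu: "pu \<in> L1" "fst pu = fst (ps ! k)" "snd (ps ! k) \<le> snd pu"
    and pd: "pd \<in> L1" "fst pd = fst (ps ! k)" "snd pd \<le> snd (ps ! k)"
  shows "straight_vertex ps k"
proof -
  obtain bb where bb: "bb \<in> P" "ps ! k \<in> vseg bb"
    using vertex_on_vseg[OF k] by blast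
  have "snd pu - snd pd \<le> 1"
    using L1_height pu(1) pd(1) by blast
  then have "pu \<in> vseg bb \<or> pd \<in> vseg bb"
    using bb(2) pu pd by (auto simp: mem_vseg_iff)
  then obtain w where w: "w \<in> L1" "w \<in> vseg bb"
    using pu(1) pd(1) by blast
  obtain j where "j < length ps" "w \<in> closed_segment (ps ! j) (nxt ps j)"
    using L1_leg[OF w(1)] by blast
  moreover have "w \<noteq> ps ! k"
    using w(1) v by blast
  ultimately show ?thesis
    using straight_vertex_if_vseg_meets_leg[OF k _ bb w(2)] by blast
qed

definition enters :: "real \<Rightarrow> nat \<Rightarrow> real \<Rightarrow> bool" where
  "enters \<sigma> k lam \<longleftrightarrow> k < length ps \<and> \<sigma> * c < \<sigma> * fst (ps ! k) \<and> lam \<le> 0 \<and>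
    (prv ps k = q + lam *\<^sub>R (ps ! k - q) \<or> nxt ps k = q + lam *\<^sub>R (ps ! k - q))"

lemma enters_at_vertex:
  assumes \<sigma>: "\<sigma> = 1 \<or> \<sigma> = -1" and k0: "k0 < length ps" "ps ! k0 = q"
  shows "\<exists>k lam. enters \<sigma> k lam"
proof -
  have n0: "0 < length ps"
    using ps_ne by simp
  have p12: "p1 \<in> L1" "p2 \<in> L1"
    using curve_a curve_b a_le_b by auto
  have "straight_vertex ps k0"
  proof (cases "snd p1 \<le> snd p2")
    case True
    then show ?thesis
      using straight_if_L1_above_below[OF k0(1) _ p12(2) _ _ p12(1)] k0(2) q_notin_L1
        q_on_line fst_p1 fst_p2 q_strictly_between by simp
  next
    case False
    then show ?thesis
      using straight_if_L1_above_below[OF k0(1) _ p12(1) _ _ p12(2)] k0(2) q_notin_L1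
        q_on_line fst_p1 fst_p2 q_strictly_between by simp
  qed
  moreover have "q \<noteq> prv ps k0" "q \<noteq> nxt ps k0"
    using prv_neq nxt_neq length_ge_2 k0 by metis+
  ultimately have q_open: "q \<in> open_segment (prv ps k0) (nxt ps k0)"
    using k0(2) by (simp add: open_segment_def)
  have "fst (prv ps k0) \<noteq> fst (nxt ps k0)"
  proof
    assume "fst (prv ps k0) = fst (nxt ps k0)"
    then have "prv ps k0 = nxt ps k0"
      using is_tour_fst_eq[OF inj_fst tour] n0
      by (simp add: prv_def nxt_conv_succ_mod pred_mod_less succ_mod_less)
    then show False
      using q_open by (simp add: open_segment_def)
  qed
  then consider "\<sigma> * c < \<sigma> * fst (nxt ps k0)" | "\<sigma> * c < \<sigma> * fst (prv ps k0)"
    using open_segment_crossing_side[OF q_open q_on_line _ \<sigma>] by blast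
  then show ?thesis
  proof cases
    case 1
    then have "enters \<sigma> (succ_mod (length ps) k0) 0"
      using prv_succ_mod[OF k0(1)] k0(2) n0 by (simp add: enters_def nxt_conv_succ_mod succ_mod_less)
    then show ?thesis by blast
  next
    case 2
    then have "enters \<sigma> (pred_mod (length ps) k0) 0"
      using nxt_pred_mod[OF k0(1)] k0(2) n0 by (simp add: enters_def prv_def pred_mod_less)
    then show ?thesis by blast
  qed
qed

lemma enters_inside_leg:
  assumes \<sigma>: "\<sigma> = 1 \<or> \<sigma> = -1" and q: "q \<notin> set ps"
  shows "\<exists>k lam. enters \<sigma> k lam"
proof -
  have n0: "0 < length ps"
    using ps_ne by simp
  obtain t0 where t0: "q = curve ps t0"
    using q_on_tour by blast
  define i where "i = nat (\<lfloor>t0\<rfloor> mod int (length ps))"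
  have i: "i < length ps"
    using n0 by (simp add: i_def nat_less_iff)
  have "q \<in> closed_segment (ps ! i) (nxt ps i)"
    using curve_in_leg[of ps t0] t0 by (simp add: i_def)
  moreover have "q \<noteq> ps ! i" "q \<noteq> nxt ps i"
    using q i n0 by (auto simp: nxt_conv_succ_mod succ_mod_less)
  ultimately have q_open: "q \<in> open_segment (ps ! i) (nxt ps i)"
    by (simp add: open_segment_def)
  then consider "\<sigma> * c < \<sigma> * fst (nxt ps i)" | "\<sigma> * c < \<sigma> * fst (ps ! i)"
    using open_segment_crossing_side[OF q_open q_on_line _ \<sigma>] fst_nxt_neq[OF length_ge_2 i] by metis
  then show ?thesis
  proof cases
    case 1
    obtain r where "r \<le> 0" "ps ! i = q + r *\<^sub>R (nxt ps i - q)"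
      using open_segment_behind[OF q_open] by blast
    then have "enters \<sigma> (succ_mod (length ps) i) r"
      using 1 prv_succ_mod[OF i] n0 by (simp add: enters_def nxt_conv_succ_mod succ_mod_less)
    then show ?thesis by blast
  next
    case 2
    obtain r where "r \<le> 0" "nxt ps i = q + r *\<^sub>R (ps ! i - q)"
      using open_segment_behind q_open by (metis open_segment_commute)
    then have "enters \<sigma> i r"
      using 2 i by (simp add: enters_def)
    then show ?thesis by blast
  qed
qed

lemma ray_meets_L1:
  assumes \<sigma>: "\<sigma> = 1 \<or> \<sigma> = -1" and side: "\<forall>t\<in>{a<..<b}. \<sigma> * c < \<sigma> * fst (curve ps t)"
    and D: "0 < \<sigma> * fst D"
  shows "\<exists>t\<ge>0. q + t *\<^sub>R D \<in> L1"
proof -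
  obtain B where B: "0 \<le> B" "\<And>x. x \<in> L1 \<Longrightarrow> \<bar>fst x\<bar> \<le> B \<and> \<bar>snd x\<bar> \<le> B"
    using L1_bounds by blast
  have "\<sigma> \<noteq> 0" "fst D \<noteq> 0"
    using D by auto
  define T where "T = (B + \<bar>c\<bar> + 1) / (\<sigma> * fst D)"
  have T: "0 < T" "T * (\<sigma> * fst D) = B + \<bar>c\<bar> + 1"
    using D B(1) \<open>\<sigma> \<noteq> 0\<close> \<open>fst D \<noteq> 0\<close> by (simp_all add: T_def)
  define F where "F = q + T *\<^sub>R D"
  have \<sigma>F: "\<sigma> * fst F = \<sigma> * c + (B + \<bar>c\<bar> + 1)"
    using T(2) q_on_line by (simp add: F_def algebra_simps)
  have F_out: "fst x \<noteq> fst F" if "x \<in> L1" for x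
  proof
    assume "fst x = fst F"
    then have "\<sigma> * fst x = \<sigma> * c + (B + \<bar>c\<bar> + 1)"
      using \<sigma>F by simp
    moreover have "\<sigma> * fst x \<le> B" "- \<bar>c\<bar> \<le> \<sigma> * c"
      using B(2)[OF that] \<sigma> by auto
    ultimately show False
      by linarith
  qed
  have "\<forall>x\<in>L1. snd x < B + 1"
    using B(2) by (fastforce simp: abs_le_iff)
  then have "\<exists>p\<in>L1. p \<in> closed_segment q F \<or> p \<in> closed_segment F (fst F, B + 1)"
    using L1_meets_hook[OF \<sigma> side] \<sigma>F B(1) by simp
  then obtain p where p: "p \<in> L1" "p \<in> closed_segment q F"
    using F_out closed_segment_vertical(1) by blast
  then obtain u where "0 \<le> u" "p = q + (u * T) *\<^sub>R D"
    using closed_segment_on_ray unfolding F_def by blast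
  then show ?thesis
    using p(1) T(1) by (intro exI[of _ "u * T"]) simp
qed

end

text \<open>\<open>L1\<close> lies on the side \<open>\<sigma> (x - c) > 0\<close> of \<open>\<Gamma>\<close>; the tour enters that side at \<open>q\<close>,
  coming from \<open>q + lam D\<close> and heading for vertex \<open>k1 = q + D\<close>; \<open>q + ts D\<close> is the first point of
  \<open>L1\<close> on the ray from \<open>q\<close> in direction \<open>D\<close>.\<close>

locale excursion_ray = excursion +
  fixes \<sigma> :: real and D :: point and k1 :: nat and lam ts :: real
  assumes sign: "\<sigma> = 1 \<or> \<sigma> = -1"
    and side: "\<forall>t\<in>{a<..<b}. \<sigma> * c < \<sigma> * fst (curve ps t)"
    and D_side: "0 < \<sigma> * fst D"
    and k1: "k1 < length ps" "ps ! k1 = q + D"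
    and entered: "prv ps k1 = q + lam *\<^sub>R D \<or> nxt ps k1 = q + lam *\<^sub>R D" "lam \<le> 0"
    and hit: "0 < ts" "q + ts *\<^sub>R D \<in> L1"
    and first_hit: "\<And>t. 0 \<le> t \<Longrightarrow> t < ts \<Longrightarrow> q + t *\<^sub>R D \<notin> L1"
begin

lemma D_nonzero: "D \<noteq> 0"
  using D_side by auto

lemma ray_side:
  assumes "0 < s"
  shows "\<sigma> * c < \<sigma> * fst (q + s *\<^sub>R D)"
proof -
  have "\<sigma> * fst (q + s *\<^sub>R D) = \<sigma> * c + s * (\<sigma> * fst D)"
    using q_on_line by (simp add: algebra_simps)
  then show ?thesis
    using assms D_side by simp
qed

lemma L1_meets_vertical:
  assumes s: "0 < s" "s < ts" and Y: "(\<forall>x\<in>L1. snd x < Y) \<or> (\<forall>x\<in>L1. Y < snd x)"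
  shows "\<exists>p\<in>L1. p \<in> closed_segment (q + s *\<^sub>R D) (fst (q + s *\<^sub>R D), Y)"
proof -
  let ?v = "q + s *\<^sub>R D"
  have "\<exists>p\<in>L1. p \<in> closed_segment q ?v \<or> p \<in> closed_segment ?v (fst ?v, Y)"
    using L1_meets_hook[OF sign side less_imp_le[OF ray_side[OF s(1)]] Y] .
  moreover have "p \<notin> closed_segment q ?v" if "p \<in> L1" for p
  proof
    assume "p \<in> closed_segment q ?v"
    then obtain u where "0 \<le> u" "u \<le> 1" "p = q + (u * s) *\<^sub>R D"
      using closed_segment_on_ray by blast
    moreover have "u * s < ts"
      using calculation(1,2) s by (meson le_less_trans mult_left_le_one_le less_imp_le)
    ultimately show False
      using first_hit that s(1) by simp
  qed
  ultimately show ?thesis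
    by blast
qed

text \<open>By the hook lemma, \<open>L1\<close> passes above and below every vertex on the ray before the first hit.\<close>

lemma straight_before_hit:
  assumes k: "k < length ps" and v: "ps ! k = q + s *\<^sub>R D" and s: "0 < s" "s < ts"
  shows "straight_vertex ps k"
proof -
  obtain B where B: "\<And>x. x \<in> L1 \<Longrightarrow> \<bar>fst x\<bar> \<le> B \<and> \<bar>snd x\<bar> \<le> B"
    using L1_bounds by blast
  let ?v = "q + s *\<^sub>R D"
  define Yu where "Yu = max B (snd ?v) + 1"
  define Yd where "Yd = min (- B) (snd ?v) - 1"
  have "\<forall>x\<in>L1. snd x < Yu" "\<forall>x\<in>L1. Yd < snd x"
    using B by (fastforce simp: Yu_def Yd_def abs_le_iff)+
  then obtain pu pd where pu: "pu \<in> L1" "pu \<in> closed_segment ?v (fst ?v, Yu)"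
    and pd: "pd \<in> L1" "pd \<in> closed_segment ?v (fst ?v, Yd)"
    using L1_meets_vertical[OF s] by meson
  show ?thesis
  proof (rule straight_if_L1_above_below[OF k _ pu(1) _ _ pd(1)])
    show "ps ! k \<notin> L1"
      using first_hit v s by simp
    show "fst pu = fst (ps ! k)" "snd (ps ! k) \<le> snd pu"
      using closed_segment_vertical[OF pu(2)] v by (auto simp: Yu_def)
    show "fst pd = fst (ps ! k)" "snd pd \<le> snd (ps ! k)"
      using closed_segment_vertical[OF pd(2)] v by (auto simp: Yd_def)
  qed
qed

lemma walk_exit:
  obtains k u s' s where "k < length ps" "u = prv ps k \<or> u = nxt ps k" "u = q + s' *\<^sub>R D"
    "ps ! k = q + s *\<^sub>R D" "s' < ts" "ts \<le> s"
proof -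
  define n where "n = length ps"
  have n: "0 < n" "2 \<le> n"
    using length_ge_2 ps_ne by (simp_all add: n_def)
  have straight: "ps ! k \<in> closed_segment (prv ps k) (nxt ps k)"
    if "k \<in> {..<n}" "ps ! k = q + s *\<^sub>R D" "0 < s" "s < ts" for k s
    using straight_before_hit that by (simp add: n_def)
  from entered(1) show ?thesis
  proof
    assume entry: "prv ps k1 = q + lam *\<^sub>R D"
    obtain k s' s where "k \<in> {..<n}" "ps ! pred_mod n k = q + s' *\<^sub>R D" "ps ! k = q + s *\<^sub>R D" "s' < ts" "ts \<le> s"
    proof (rule walk_along_ray[of k1 "{..<n}" "succ_mod n" "pred_mod n" n "(!) ps" q D lam ts])
      show "ps ! k \<in> closed_segment (ps ! pred_mod n k) (ps ! succ_mod n k) \<and> ps ! succ_mod n k \<noteq> ps ! k"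
        if "k \<in> {..<n}" "ps ! k = q + s *\<^sub>R D" "0 < s" "s < ts" for k s
        using straight[OF that] nxt_neq[of k] n that(1) by (simp add: n_def prv_def nxt_conv_succ_mod)
    qed (use k1 entry entered(2) hit(1) D_nonzero n in
        \<open>simp_all add: n_def succ_mod_less pred_succ_mod funpow_succ_mod prv_def\<close>)
    then show ?thesis
      using that[of k "prv ps k" s' s] by (simp add: n_def prv_def)
  next
    assume entry: "nxt ps k1 = q + lam *\<^sub>R D"
    obtain k s' s where "k \<in> {..<n}" "ps ! succ_mod n k = q + s' *\<^sub>R D" "ps ! k = q + s *\<^sub>R D" "s' < ts" "ts \<le> s"
    proof (rule walk_along_ray[of k1 "{..<n}" "pred_mod n" "succ_mod n" n "(!) ps" q D lam ts])
      show "ps ! k \<in> closed_segment (ps ! succ_mod n k) (ps ! pred_mod n k) \<and> ps ! pred_mod n k \<noteq> ps ! k"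
        if "k \<in> {..<n}" "ps ! k = q + s *\<^sub>R D" "0 < s" "s < ts" for k s
        using straight[OF that] prv_neq[of k] n that(1)
        by (simp add: n_def prv_def nxt_conv_succ_mod closed_segment_commute)
    qed (use k1 entry entered(2) hit(1) D_nonzero n in
        \<open>simp_all add: n_def pred_mod_less succ_pred_mod funpow_pred_mod nxt_conv_succ_mod\<close>)
    then show ?thesis
      using that[of k "nxt ps k" s' s] by (simp add: n_def nxt_conv_succ_mod)
  qed
qed

lemma reach_hit:
  "(\<exists>k<length ps. ps ! k = q + ts *\<^sub>R D \<and> (\<exists>s'<ts. prv ps k = q + s' *\<^sub>R D \<or> nxt ps k = q + s' *\<^sub>R D))
   \<or> (\<exists>i<length ps. q + ts *\<^sub>R D \<in> open_segment (ps ! i) (nxt ps i) \<and> cross (nxt ps i - ps ! i) D = 0)"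
proof -
  obtain k u s' s where k: "k < length ps" "u = prv ps k \<or> u = nxt ps k" "u = q + s' *\<^sub>R D"
    "ps ! k = q + s *\<^sub>R D" "s' < ts" "ts \<le> s"
    using walk_exit by blast
  show ?thesis
  proof (cases "s = ts")
    case True
    then show ?thesis
      using k by blast
  next
    case False
    then have z: "q + ts *\<^sub>R D \<in> open_segment u (ps ! k)"
      using open_segment_on_ray[OF k(5) _ D_nonzero] k(3,4,6) by simp
    have n0: "0 < length ps"
      using ps_ne by simp
    obtain i where i: "i < length ps" "ps ! i = u \<and> nxt ps i = ps ! k \<or> ps ! i = ps ! k \<and> nxt ps i = u"
    proof (cases "u = prv ps k")
      case True
      then show ?thesis
        using that[of "pred_mod (length ps) k"] nxt_pred_mod[OF k(1)] n0 by (simp add: prv_def pred_mod_less)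
    next
      case False
      then show ?thesis
        using that[of k] k(1,2) by simp
    qed
    then have "q + ts *\<^sub>R D \<in> open_segment (ps ! i) (nxt ps i)"
      using z open_segment_commute by metis
    moreover have "nxt ps i - ps ! i = (s - s') *\<^sub>R D \<or> nxt ps i - ps ! i = (s' - s) *\<^sub>R D"
      using i(2) k(3,4) by (auto simp: algebra_simps)
    then have "cross (nxt ps i - ps ! i) D = 0"
      by auto
    ultimately show ?thesis
      using i(1) by blast
  qed
qed

lemma no_backtrack:
  assumes s0: "a < s0" "s0 < b" and "0 < \<epsilon>0" "0 < \<mu>" and \<delta>: "\<delta> = 1 \<or> \<delta> = -1"
    and along: "\<And>\<epsilon>. 0 < \<epsilon> \<Longrightarrow> \<epsilon> \<le> \<epsilon>0 \<Longrightarrow> curve ps (s0 + \<delta> * \<epsilon>) = q + (ts - \<epsilon> * \<mu>) *\<^sub>R D"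
  shows False
proof -
  define \<epsilon> where "\<epsilon> = min \<epsilon>0 (min (s0 - a) (min (b - s0) (ts / \<mu>)))"
  have \<epsilon>: "0 < \<epsilon>" "\<epsilon> \<le> \<epsilon>0" "\<epsilon> \<le> s0 - a" "\<epsilon> \<le> b - s0" "\<epsilon> \<le> ts / \<mu>"
    using assms(1-4) hit(1) by (auto simp: \<epsilon>_def)
  then have "\<epsilon> * \<mu> \<le> ts" "0 < \<epsilon> * \<mu>"
    using assms(4) by (simp_all add: le_divide_eq)
  moreover have "s0 + \<delta> * \<epsilon> \<in> {a..b}"
    using \<delta> \<epsilon> by auto
  then have "q + (ts - \<epsilon> * \<mu>) *\<^sub>R D \<in> L1"
    using along[OF \<epsilon>(1,2)] by (metis image_eqI)
  ultimately show False
    using first_hit[of "ts - \<epsilon> * \<mu>"] by simp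
qed

lemma hit_vertex_with_neighbour_behind:
  assumes m: "a < of_int m" "of_int m < b"
    and j: "j = nat (m mod int (length ps))" and z: "ps ! j = q + ts *\<^sub>R D"
    and nb: "prv ps j = q + s' *\<^sub>R D \<or> nxt ps j = q + s' *\<^sub>R D" and s': "s' < ts"
  shows False
  using nb
proof
  assume prv: "prv ps j = q + s' *\<^sub>R D"
  show False
  proof (rule no_backtrack[OF m zero_less_one _ , of "ts - s'" "-1"])
    fix \<epsilon> :: real assume "0 < \<epsilon>" "\<epsilon> \<le> 1"
    then have "curve ps (of_int m - \<epsilon>) = ps ! j + \<epsilon> *\<^sub>R (prv ps j - ps ! j)"
      using curve_before_int[OF ps_ne] j by simp
    then show "curve ps (of_int m + -1 * \<epsilon>) = q + (ts - \<epsilon> * (ts - s')) *\<^sub>R D"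
      using prv z by (simp add: algebra_simps)
  qed (use s' in auto)
next
  assume nxt: "nxt ps j = q + s' *\<^sub>R D"
  show False
  proof (rule no_backtrack[OF m zero_less_one _ , of "ts - s'" 1])
    fix \<epsilon> :: real assume "0 < \<epsilon>" "\<epsilon> \<le> 1"
    then have "curve ps (of_int m + \<epsilon>) = curve ps (of_int m) + \<epsilon> *\<^sub>R (nxt ps j - ps ! j)"
      using curve_diff_on_piece[OF ps_ne, of "of_int m" m "of_int m + \<epsilon>"] j by simp
    then show "curve ps (of_int m + 1 * \<epsilon>) = q + (ts - \<epsilon> * (ts - s')) *\<^sub>R D"
      using nxt z j curve_of_int[of ps m] by (simp add: algebra_simps)
  qed (use s' in auto)
qed

lemma hit_inside_leg_transversal:
  assumes s0: "a < s0" "s0 < b" "s0 \<noteq> of_int \<lfloor>s0\<rfloor>" and z: "curve ps s0 = q + ts *\<^sub>R D"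
  defines "j \<equiv> nat (\<lfloor>s0\<rfloor> mod int (length ps))"
  shows "cross (nxt ps j - ps ! j) D \<noteq> 0"
proof
  assume "cross (nxt ps j - ps ! j) D = 0"
  then obtain \<kappa> where \<kappa>: "nxt ps j - ps ! j = \<kappa> *\<^sub>R D"
    using cross_eq_0_iff[OF D_nonzero] by blast
  have "j < length ps"
    using ps_ne by (simp add: j_def nat_less_iff)
  then have "\<kappa> \<noteq> 0"
    using \<kappa> nxt_neq[OF length_ge_2] by force
  define m where "m = \<lfloor>s0\<rfloor>"
  have m: "of_int m < s0" "s0 < of_int m + 1"
    using s0(3) unfolding m_def by linarith+
  have piece: "curve ps t = q + (ts + (t - s0) * \<kappa>) *\<^sub>R D" if "t \<in> {of_int m..of_int m + 1}" for t
    using curve_diff_on_piece[OF ps_ne _ that, of s0] m z \<kappa> by (simp add: j_def m_def algebra_simps)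
  consider "0 < \<kappa>" | "\<kappa> < 0"
    using \<open>\<kappa> \<noteq> 0\<close> by linarith
  then show False
  proof cases
    case 1
    show False
    proof (rule no_backtrack[OF s0(1,2), of "s0 - of_int m" \<kappa> "-1"])
      show "curve ps (s0 + -1 * \<epsilon>) = q + (ts - \<epsilon> * \<kappa>) *\<^sub>R D" if "0 < \<epsilon>" "\<epsilon> \<le> s0 - of_int m" for \<epsilon>
        using piece[of "s0 - \<epsilon>"] that m by (simp add: algebra_simps)
    qed (use m 1 in auto)
  next
    case 2
    show False
    proof (rule no_backtrack[OF s0(1,2), of "of_int m + 1 - s0" "- \<kappa>" 1])
      show "curve ps (s0 + 1 * \<epsilon>) = q + (ts - \<epsilon> * - \<kappa>) *\<^sub>R D" if "0 < \<epsilon>" "\<epsilon> \<le> of_int m + 1 - s0" for \<epsilon>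
        using piece[of "s0 + \<epsilon>"] that m by (simp add: algebra_simps)
    qed (use m 2 in auto)
  qed
qed

lemma hit_at_vertex_impossible:
  assumes m: "a < of_int m" "of_int m < b" and z: "curve ps (of_int m) = q + ts *\<^sub>R D"
  shows False
proof -
  define j where "j = nat (m mod int (length ps))"
  have j: "j < length ps" "ps ! j = q + ts *\<^sub>R D"
    using ps_ne z curve_of_int[of ps m] by (simp_all add: j_def nat_less_iff)
  have "\<exists>s'<ts. prv ps j = q + s' *\<^sub>R D \<or> nxt ps j = q + s' *\<^sub>R D"
    using reach_hit
  proof
    assume "\<exists>k<length ps. ps ! k = q + ts *\<^sub>R D \<and> (\<exists>s'<ts. prv ps k = q + s' *\<^sub>R D \<or> nxt ps k = q + s' *\<^sub>R D)"
    then show ?thesis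
      using j nth_eq_iff by metis
  next
    assume "\<exists>i<length ps. q + ts *\<^sub>R D \<in> open_segment (ps ! i) (nxt ps i) \<and> cross (nxt ps i - ps ! i) D = 0"
    then obtain i where i: "i < length ps" "ps ! j \<in> open_segment (ps ! i) (nxt ps i)"
      "cross (nxt ps i - ps ! i) D = 0"
      using j(2) by metis
    obtain \<kappa> where \<kappa>: "nxt ps i - ps ! i = \<kappa> *\<^sub>R D" "\<kappa> \<noteq> 0"
      using i(3) cross_eq_0_iff[OF D_nonzero] nxt_neq[OF length_ge_2 i(1)] by (metis scaleR_zero_left eq_iff_diff_eq_0)
    have "straight_vertex ps j" "cross (nxt ps j - prv ps j) (nxt ps i - ps ! i) = 0"
      using vertex_on_open_leg[OF j(1) i(1,2)] by auto
    moreover have "cross (nxt ps j - prv ps j) D = 0"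
      using calculation(2) \<kappa> by simp
    then obtain \<kappa>' where "nxt ps j - prv ps j = \<kappa>' *\<^sub>R D"
      using cross_eq_0_iff[OF D_nonzero] by blast
    moreover have "ps ! j \<noteq> prv ps j" "ps ! j \<noteq> nxt ps j"
      using prv_neq nxt_neq length_ge_2 j(1) by metis+
    ultimately show ?thesis
      using closed_segment_along_line_behind j(2) by metis
  qed
  then show False
    using hit_vertex_with_neighbour_behind[OF m j_def j(2)] by blast
qed

lemma hit_inside_leg_impossible:
  assumes s0: "a < s0" "s0 < b" "s0 \<noteq> of_int \<lfloor>s0\<rfloor>" and z: "curve ps s0 = q + ts *\<^sub>R D"
  shows False
proof -
  define j where "j = nat (\<lfloor>s0\<rfloor> mod int (length ps))"
  have j: "j < length ps"
    using ps_ne by (simp add: j_def nat_less_iff)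
  have transversal: "cross (nxt ps j - ps ! j) D \<noteq> 0"
    using hit_inside_leg_transversal[OF s0 z] by (simp add: j_def)
  have "ps ! j \<noteq> nxt ps j"
    using nxt_neq[OF length_ge_2 j] by metis
  then have z_in: "q + ts *\<^sub>R D \<in> open_segment (ps ! j) (nxt ps j)"
    using curve_in_open_leg[OF s0(3), of ps] z by (simp add: j_def)
  show False
    using reach_hit
  proof
    assume "\<exists>k<length ps. ps ! k = q + ts *\<^sub>R D \<and> (\<exists>s'<ts. prv ps k = q + s' *\<^sub>R D \<or> nxt ps k = q + s' *\<^sub>R D)"
    then obtain k s' where k: "k < length ps" "ps ! k = q + ts *\<^sub>R D" "s' < ts"
      "prv ps k = q + s' *\<^sub>R D \<or> nxt ps k = q + s' *\<^sub>R D"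
      by blast
    have "straight_vertex ps k" "cross (nxt ps k - prv ps k) (nxt ps j - ps ! j) = 0"
      using vertex_on_open_leg[OF k(1) j] z_in k(2) by auto
    moreover obtain \<kappa> where "\<kappa> \<noteq> 0" "nxt ps k - prv ps k = \<kappa> *\<^sub>R D"
      using closed_segment_end_on_line[OF calculation(1) k(2) k(4)] k(3) D_nonzero by auto
    ultimately show False
      using transversal by (simp add: cross_skew[of D])
  next
    assume "\<exists>i<length ps. q + ts *\<^sub>R D \<in> open_segment (ps ! i) (nxt ps i) \<and> cross (nxt ps i - ps ! i) D = 0"
    then obtain i where i: "i < length ps" "q + ts *\<^sub>R D \<in> open_segment (ps ! i) (nxt ps i)"
      "cross (nxt ps i - ps ! i) D = 0"
      by blast
    obtain \<kappa> where \<kappa>: "nxt ps i - ps ! i = \<kappa> *\<^sub>R D" "\<kappa> \<noteq> 0"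
      using i(3) cross_eq_0_iff[OF D_nonzero] nxt_neq[OF length_ge_2 i(1)] by (metis scaleR_zero_left eq_iff_diff_eq_0)
    then have crossing: "cross (nxt ps i - ps ! i) (nxt ps j - ps ! j) \<noteq> 0"
      using transversal by (simp add: cross_skew[of D])
    then have "i \<noteq> j"
      by auto
    moreover have "leg ps i \<inter> leg ps j = {q + ts *\<^sub>R D}"
      unfolding leg_def using closed_segment_Int_eq_singleton[OF _ _ crossing] i(2) z_in
      by (simp add: open_segment_def)
    ultimately have "legs_cross ps i j"
      using i(2) z_in unfolding legs_cross_def by blast
    then show False
      using non_self_crossing i(1) j \<open>i \<noteq> j\<close> by (auto simp: non_self_crossing_def)
  qed
qed

lemma first_hit_impossible: False
proof -
  obtain s0 where s0: "s0 \<in> {a..b}" "curve ps s0 = q + ts *\<^sub>R D"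
    using hit(2) by auto
  have "fst (curve ps s0) \<noteq> c"
    using ray_side[OF hit(1)] s0(2) by auto
  then have "a < s0" "s0 < b"
    using s0(1) curve_a curve_b fst_p1 fst_p2 by (auto simp: less_le)
  then show False
    using hit_at_vertex_impossible hit_inside_leg_impossible s0(2) by (metis of_int_floor_le)
qed

end

context excursion
begin

lemma excursion_impossible: False
proof -
  obtain \<sigma> where \<sigma>: "\<sigma> = 1 \<or> \<sigma> = -1" and side: "\<forall>t\<in>{a<..<b}. \<sigma> * c < \<sigma> * fst (curve ps t)"
    using side_exists by blast
  obtain k1 lam where "enters \<sigma> k1 lam"
    using enters_at_vertex enters_inside_leg \<sigma> by (metis in_set_conv_nth)
  then have k1: "k1 < length ps" "\<sigma> * c < \<sigma> * fst (ps ! k1)" "lam \<le> 0"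
    "prv ps k1 = q + lam *\<^sub>R (ps ! k1 - q) \<or> nxt ps k1 = q + lam *\<^sub>R (ps ! k1 - q)"
    by (simp_all add: enters_def)
  define D where "D = ps ! k1 - q"
  have D: "0 < \<sigma> * fst D"
    using k1(2) q_on_line by (simp add: D_def algebra_simps)
  obtain ts where ts: "0 < ts" "q + ts *\<^sub>R D \<in> L1" "\<And>t. 0 \<le> t \<Longrightarrow> t < ts \<Longrightarrow> q + t *\<^sub>R D \<notin> L1"
    using ray_meets_L1[OF \<sigma> side D] first_hit_on_ray[OF compact_imp_closed[OF L1_compact] q_notin_L1]
    by metis
  interpret excursion_ray P ps \<tau> c a b p1 p2 q \<sigma> D k1 lam ts
    using \<sigma> side D k1 ts by unfold_locales (auto simp: D_def)
  show False
    by (rule first_hit_impossible)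
qed

end

theorem lemma20:
  fixes P :: "point set" and ps :: "point list" and \<tau> :: nat
    and c a b :: real and p1 p2 :: point
  assumes inst: "seg_instance P"
    and tour: "is_tour P ps"
    and opt: "\<forall>qs. is_tour P qs \<longrightarrow> cost ps \<le> cost qs"
    and nc: "no_consec_same_seg P ps"
    and nsc: "non_self_crossing ps"
    and tau: "\<tau> \<ge> 1"
    and p12: "p1 \<noteq> p2"
    and on1: "fst p1 = c" and on2: "fst p2 = c"
    and ab: "a \<le> b"
    and ca: "curve ps a = p1" and cb: "curve ps b = p2"
    and L1_strip: "curve ps ` {a..b} \<subseteq> strip P \<tau>"
    and L1_nocross: "\<forall>t\<in>{a<..<b}. fst (curve ps t) \<noteq> c"
  shows "\<forall>q\<in>open_segment p1 p2. q \<notin> restr P ps \<tau>"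
proof (intro ballI notI)
  fix q
  assume q: "q \<in> open_segment p1 p2" "q \<in> restr P ps \<tau>"
  interpret excursion P ps \<tau> c a b p1 p2 q
    using inst tour opt nsc p12 on1 on2 ab ca cb L1_strip L1_nocross q
    unfolding seg_instance_def restr_def by unfold_locales auto
  show False
    by (rule excursion_impossible)
qed

end
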